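(* Let $(W,S)$ be a right-angled Coxeter system, $q>0$ and $p=(q-1)/\sqrt q$. For every $\mathbf{w}\in W$, $$T_{\mathbf{w}}=\sum_{(\mathbf{w}',\Gamma_0,\mathbf{w}'')\in A_{\mathbf{w}}} p^{\#V\Gamma_0}\, T^{(1)}_{\mathbf{w}'}\,P_{V\Gamma_0}\,T^{(1)}_{\mathbf{w}''}$$ as operators on $L^2(\mathcal{M}_q)$.
   Context: $(W,S)$: $S$ finite, $m(s,s)=1$, $m(s,t)=m(t,s)\in\{2,\infty\}$ for $s\neq t$, $W=\langle S\mid (st)^{m(s,t)}=1\rangle$; $|\mathbf{w}|$ word length. The Hecke algebra has linear basis $\{T_{\mathbf{w}}\}_{\mathbf{w}\in W}$, $T_e=1$, $T_sT_{\mathbf{w}}=T_{s\mathbf{w}}$ if $|s\mathbf{w}|>|\mathbf{w}|$ and $T_{s\mathbf{w}}+pT_{\mathbf{w}}$ otherwise, $T_{\mathbf{w}}^*=T_{\mathbf{w}^{-1}}$; $L^2(\mathcal{M}_q)$ is the GNS space of the trace $\tau(T_{\mathbf{w}})=\delta_{\mathbf{w},e}$ with cyclic vector $\Omega=T_e$ (so $\{T_{\mathbf{w}}\Omega\}$ is an orthonormal basis), and $T_{\mathbf{w}}$ acts by left multiplication. For $\mathbf{v}\in W$, $T^{(1)}_{\mathbf{v}}$ is the unitary on $L^2(\mathcal{M}_q)$ with $T^{(1)}_{\mathbf{v}}(T_{\mathbf{w}}\Omega)=T_{\mathbf{v}\mathbf{w}}\Omega$. For $\mathbf{u}\in W$,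 $P_{\mathbf{u}}$ is the orthogonal projection onto the closed span of $\{T_{\mathbf{v}}\Omega: |\mathbf{u}^{-1}\mathbf{v}|=|\mathbf{v}|-|\mathbf{u}|\}$. A clique is a (possibly empty) set $V\Gamma_0\subseteq S$ of pairwise distinct generators with $m(s,t)=2$ for all distinct $s,t\in V\Gamma_0$; $\#V\Gamma_0=|V\Gamma_0|$ is its number of elements, $V\Gamma_0$ also denotes the product in $W$ of its elements, and $P_{V\Gamma_0}$ is $P_{\mathbf{u}}$ for this product $\mathbf{u}$. $A_{\mathbf{w}}$ is the set of triples $(\mathbf{w}',\Gamma_0,\mathbf{w}'')$ with $\mathbf{w}',\mathbf{w}''\in W$ and $\Gamma_0$ a clique such that (1) $\mathbf{w}=\mathbf{w}'\,V\Gamma_0\,\mathbf{w}''$, (2) $|\mathbf{w}|=|\mathbf{w}'|+|V\Gamma_0|+|\mathbf{w}''|$, (3) every $s\in S$ that commutes with all elements of $V\Gamma_0$ satisfies $|\mathbf{w}'s|>|\mathbf{w}'|$. *)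

theory Defs
  imports "HOL-Analysis.Analysis"
begin

text \<open>Right-angled Coxeter system given by a finite generating set S and a symmetric
  relation comm on S: comm s t (s \<noteq> t) means m(s,t) = 2, otherwise m(s,t) = \<infinity>.\<close>

inductive cstep :: "'a set \<Rightarrow> ('a \<Rightarrow> 'a \<Rightarrow> bool) \<Rightarrow> 'a list \<Rightarrow> 'a list \<Rightarrow> bool"
  for S comm where
  del: "s \<in> S \<Longrightarrow> cstep S comm (xs @ [s, s] @ ys) (xs @ ys)"
| swap: "s \<in> S \<Longrightarrow> t \<in> S \<Longrightarrow> s \<noteq> t \<Longrightarrow> comm s t \<Longrightarrow>
          cstep S comm (xs @ [s, t] @ ys) (xs @ [t, s] @ ys)"

definition wcls :: "'a set \<Rightarrow> ('a \<Rightarrow> 'a \<Rightarrow> bool) \<Rightarrow> 'a list \<Rightarrow> 'a list set" where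
  "wcls S comm xs = {ys. equivclp (cstep S comm) xs ys}"

definition cox_group :: "'a set \<Rightarrow> ('a \<Rightarrow> 'a \<Rightarrow> bool) \<Rightarrow> 'a list set set" where
  "cox_group S comm = {wcls S comm xs | xs. xs \<in> lists S}"

definition wmul :: "'a set \<Rightarrow> ('a \<Rightarrow> 'a \<Rightarrow> bool) \<Rightarrow> 'a list set \<Rightarrow> 'a list set \<Rightarrow> 'a list set" where
  "wmul S comm u v = {zs. \<exists>xs\<in>u. \<exists>ys\<in>v. equivclp (cstep S comm) (xs @ ys) zs}"

definition winv :: "'a list set \<Rightarrow> 'a list set" where
  "winv u = rev ` u"

definition wunit :: "'a set \<Rightarrow> ('a \<Rightarrow> 'a \<Rightarrow> bool) \<Rightarrow> 'a list set" where
  "wunit S comm = wcls S comm []"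

definition wgen :: "'a set \<Rightarrow> ('a \<Rightarrow> 'a \<Rightarrow> bool) \<Rightarrow> 'a \<Rightarrow> 'a list set" where
  "wgen S comm s = wcls S comm [s]"

definition wlen :: "'a list set \<Rightarrow> nat" where
  "wlen u = (LEAST n. \<exists>xs\<in>u. length xs = n)"

definition is_clique :: "'a set \<Rightarrow> ('a \<Rightarrow> 'a \<Rightarrow> bool) \<Rightarrow> 'a set \<Rightarrow> bool" where
  "is_clique S comm C \<longleftrightarrow> C \<subseteq> S \<and> (\<forall>s\<in>C. \<forall>t\<in>C. s \<noteq> t \<longrightarrow> comm s t)"

definition clique_prod :: "'a set \<Rightarrow> ('a \<Rightarrow> 'a \<Rightarrow> bool) \<Rightarrow> 'a set \<Rightarrow> 'a list set" where
  "clique_prod S comm C = wcls S comm (SOME xs. distinct xs \<and> set xs = C)"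

text \<open>Vectors of L^2(M_q) are functions W \<Rightarrow> complex (coefficients w.r.t. the orthonormal
  basis T_w \<Omega>); operators below are given by their (finite-row) matrix formulas.\<close>

text \<open>Left multiplication by a generator T_s:
  T_s (T_v \<Omega>) = T_{sv} \<Omega> + [|sv| < |v|] p T_v \<Omega>.\<close>
definition hecke_gen ::
  "'a set \<Rightarrow> ('a \<Rightarrow> 'a \<Rightarrow> bool) \<Rightarrow> real \<Rightarrow> 'a \<Rightarrow> ('a list set \<Rightarrow> complex) \<Rightarrow> ('a list set \<Rightarrow> complex)"
  where
  "hecke_gen S comm p s \<xi> u =
     \<xi> (wmul S comm (wgen S comm s) u)
     + (if wlen (wmul S comm (wgen S comm s) u) < wlen u then complex_of_real p * \<xi> u else 0)"

definition hecke_op ::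
  "'a set \<Rightarrow> ('a \<Rightarrow> 'a \<Rightarrow> bool) \<Rightarrow> real \<Rightarrow> 'a list set \<Rightarrow> ('a list set \<Rightarrow> complex) \<Rightarrow> ('a list set \<Rightarrow> complex)"
  where
  "hecke_op S comm p w =
     foldr (\<lambda>s f. hecke_gen S comm p s \<circ> f) (SOME xs. xs \<in> w \<and> length xs = wlen w) id"

text \<open>The unitary T^{(1)}_v : T_w \<Omega> \<mapsto> T_{vw} \<Omega>.\<close>
definition shift_op ::
  "'a set \<Rightarrow> ('a \<Rightarrow> 'a \<Rightarrow> bool) \<Rightarrow> 'a list set \<Rightarrow> ('a list set \<Rightarrow> complex) \<Rightarrow> ('a list set \<Rightarrow> complex)"
  where
  "shift_op S comm v \<xi> x = \<xi> (wmul S comm (winv v) x)"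

definition proj_op ::
  "'a set \<Rightarrow> ('a \<Rightarrow> 'a \<Rightarrow> bool) \<Rightarrow> 'a list set \<Rightarrow> ('a list set \<Rightarrow> complex) \<Rightarrow> ('a list set \<Rightarrow> complex)"
  where
  "proj_op S comm u \<xi> x =
     (if int (wlen (wmul S comm (winv u) x)) = int (wlen x) - int (wlen u) then \<xi> x else 0)"

definition A_set ::
  "'a set \<Rightarrow> ('a \<Rightarrow> 'a \<Rightarrow> bool) \<Rightarrow> 'a list set \<Rightarrow> ('a list set \<times> 'a set \<times> 'a list set) set"
  where
  "A_set S comm w = {(w', C, w''). w' \<in> cox_group S comm \<and> w'' \<in> cox_group S comm \<and>
      is_clique S comm C \<and>
      w = wmul S comm (wmul S comm w' (clique_prod S comm C)) w'' \<and>
      wlen w = wlen w' + wlen (clique_prod S comm C) + wlen w'' \<and>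
      (\<forall>s\<in>S. (\<forall>t\<in>C. wmul S comm (wgen S comm s) (wgen S comm t)
                     = wmul S comm (wgen S comm t) (wgen S comm s))
              \<longrightarrow> wlen w' < wlen (wmul S comm w' (wgen S comm s)))}"

end

theory Submission
  imports Defs
begin

text \<open>Words over \<open>S\<close> are handled through a normal form: a word is reduced when no letter can be
  moved to the front past letters commuting with it so as to cancel against an equal letter, and
  left multiplication by a generator either performs such a cancellation or prepends the
  generator. The projections of a word onto the pairs of non-commuting generators are invariant
  under the defining relations and determine the reduced form, so reduced words have minimal
  length and cancellation detects left descents.

  The formula is proved by induction along a reduced word \<open>s w\<close>. Each triple
  \<open>(w', \<Gamma>\<^sub>0, w'')\<close> of \<open>A\<^sub>w\<close> lifts to \<open>A\<^sub>s\<^sub>w\<close>: to \<open>(w', \<Gamma>\<^sub>0, s w'')\<close> and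
  \<open>(w', \<Gamma>\<^sub>0 \<union> {s}, w'')\<close> when \<open>s\<close> commutes with \<open>w'\<close> and with \<open>\<Gamma>\<^sub>0\<close>, and to
  \<open>(s w', \<Gamma>\<^sub>0, w'')\<close> otherwise; these lifts partition \<open>A\<^sub>s\<^sub>w\<close>. Since
  \<open>T\<^sub>s T\<^sub>v \<Omega> = T\<^sub>s\<^sub>v \<Omega> + [|sv| < |v|] p T\<^sub>v \<Omega>\<close>, the first and the last kind of lift produce the
  shift term of \<open>T\<^sub>s\<close>, the clique lift produces the \<open>p\<close>-term at descents, and in the last case the
  \<open>p\<close>-term vanishes.\<close>

type_synonym 'a A_triple = "'a list set \<times> 'a set \<times> 'a list set"

section \<open>Cancellation normal form of words\<close>

text \<open>\<open>cancel c s r = Some r'\<close> when \<open>r = pre @ s # post\<close> with every letter of \<open>pre\<close> commuting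
  with \<open>s\<close>, and \<open>r' = pre @ post\<close>: the word \<open>s # r\<close> shortens to \<open>r'\<close>.\<close>
fun cancel :: "('a \<Rightarrow> 'a \<Rightarrow> bool) \<Rightarrow> 'a \<Rightarrow> 'a list \<Rightarrow> 'a list option" where
  "cancel c s [] = None"
| "cancel c s (x # xs) =
     (if x = s then Some xs else if c x s then map_option (Cons x) (cancel c s xs) else None)"

definition mul_gen :: "('a \<Rightarrow> 'a \<Rightarrow> bool) \<Rightarrow> 'a \<Rightarrow> 'a list \<Rightarrow> 'a list" where
  "mul_gen c s r = (case cancel c s r of Some r' \<Rightarrow> r' | None \<Rightarrow> s # r)"

definition reduce :: "('a \<Rightarrow> 'a \<Rightarrow> bool) \<Rightarrow> 'a list \<Rightarrow> 'a list" where
  "reduce c xs = foldr (mul_gen c) xs []"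

fun reduced :: "('a \<Rightarrow> 'a \<Rightarrow> bool) \<Rightarrow> 'a list \<Rightarrow> bool" where
  "reduced c [] = True"
| "reduced c (x # r) = (reduced c r \<and> cancel c x r = None)"

lemma cancel_append:
  "cancel c s (u @ v) = (case cancel c s u of Some u' \<Rightarrow> Some (u' @ v)
     | None \<Rightarrow> if (\<forall>x\<in>set u. x \<noteq> s \<and> c x s) then map_option (\<lambda>v'. u @ v') (cancel c s v) else None)"
proof (induction u)
  case Nil show ?case by (cases "cancel c s v") auto
next
  case (Cons a u) then show ?case by (cases "cancel c s v"; auto split: option.splits)
qed

lemma cancel_SomeD:
  "cancel c s r = Some r' \<Longrightarrow> \<exists>pre post. r = pre @ s # post \<and> r' = pre @ post \<and> (\<forall>x\<in>set pre. x \<noteq> s \<and> c x s)"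
proof (induction r arbitrary: r')
  case Nil then show ?case by simp
next
  case (Cons x xs)
  show ?case
  proof (cases "x = s")
    case True then show ?thesis using Cons.prems by (intro exI[of _ "[]"] exI[of _ xs]) auto
  next
    case False
    with Cons.prems obtain r'' where "c x s" "cancel c s xs = Some r''" "r' = x # r''"
      by (auto split: if_splits)
    with Cons.IH obtain pre post where "xs = pre @ s # post" "r'' = pre @ post" "\<forall>x\<in>set pre. x \<noteq> s \<and> c x s" by blast
    then show ?thesis using False \<open>c x s\<close> \<open>r' = x # r''\<close> by (intro exI[of _ "x # pre"] exI[of _ post]) auto
  qed
qed

lemma cancel_commuting_prefix: "(\<forall>x\<in>set pre. x \<noteq> s \<and> c x s) \<Longrightarrow> cancel c s (pre @ s # post) = Some (pre @ post)"
  by (induction pre) auto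

lemma length_cancel: "cancel c s r = Some r' \<Longrightarrow> length r = Suc (length r')"
  using cancel_SomeD by fastforce

lemma set_cancel: "cancel c s r = Some r' \<Longrightarrow> set r' \<subseteq> set r"
  using cancel_SomeD by fastforce

lemma cancel_mem: "cancel c s r \<noteq> None \<Longrightarrow> s \<in> set r"
  using cancel_SomeD by fastforce


lemma cancel_append_NoneD: "cancel c s r1 = None \<Longrightarrow> cancel c s (r1 @ r2) \<noteq> None \<Longrightarrow>
    (\<forall>x\<in>set r1. x \<noteq> s \<and> c x s) \<and> cancel c s r2 \<noteq> None"
  by (auto simp: cancel_append split: if_splits)

lemma cancel_commuting_prefix_None_iff: "\<forall>x\<in>set r1. x \<noteq> s \<and> c x s \<Longrightarrow> (cancel c s (r1 @ r2) = None \<longleftrightarrow> cancel c s r2 = None)"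
proof -
  assume a: "\<forall>x\<in>set r1. x \<noteq> s \<and> c x s"
  then have "cancel c s r1 = None" using cancel_mem by fastforce
  then show ?thesis using a by (auto simp: cancel_append)
qed

lemma cancel_append_None: "cancel c s (r1 @ r2) = None \<Longrightarrow> cancel c s r1 = None"
  by (cases "cancel c s r1") (auto simp: cancel_append)

lemma cancel_snoc_NoneD:
  "cancel c t xs = None \<Longrightarrow> cancel c t (xs @ [s]) \<noteq> None \<Longrightarrow> t = s \<and> (\<forall>x\<in>set xs. x \<noteq> t \<and> c x t)"
  by (auto simp: cancel_append split: if_splits)

lemma cancel_append_Some: "cancel c s r1 = Some r1' \<Longrightarrow> cancel c s (r1 @ r2) = Some (r1' @ r2)"
  by (simp add: cancel_append)

lemma cancel_commuting_prefix_Some: "\<forall>x\<in>set r1. x \<noteq> s \<and> c x s \<Longrightarrow> cancel c s r2 = Some r2' \<Longrightarrow> cancel c s (r1 @ r2) = Some (r1 @ r2')"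
proof -
  assume a: "\<forall>x\<in>set r1. x \<noteq> s \<and> c x s" "cancel c s r2 = Some r2'"
  then have "cancel c s r1 = None" using cancel_mem by fastforce
  then show ?thesis using a by (auto simp: cancel_append)
qed

lemma distinct_reduced: "distinct cl \<Longrightarrow> reduced c cl"
  by (induction cl) (auto dest: cancel_mem)

lemma reduced_append:
  assumes "reduced c r1" "reduced c r2" "\<forall>a. cancel c a (rev r1) \<noteq> None \<longrightarrow> cancel c a r2 = None"
  shows "reduced c (r1 @ r2)"
  using assms
proof (induction r1)
  case Nil then show ?case by simp
next
  case (Cons x r1)
  have h: "\<forall>a. cancel c a (rev r1) \<noteq> None \<longrightarrow> cancel c a r2 = None"
  proof (intro allI impI)
    fix a assume "cancel c a (rev r1) \<noteq> None"
    then obtain u where "cancel c a (rev r1) = Some u" by auto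
    then have "cancel c a (rev (x # r1)) \<noteq> None" using cancel_append_Some[of c a "rev r1" u "[x]"] by simp
    then show "cancel c a r2 = None" using Cons.prems(3) by blast
  qed
  have r1: "reduced c (r1 @ r2)" using Cons h by simp
  have n: "cancel c x r1 = None" using Cons.prems(1) by simp
  have "cancel c x (r1 @ r2) = None"
  proof (rule ccontr)
    assume "cancel c x (r1 @ r2) \<noteq> None"
    from cancel_append_NoneD[OF n this] have ac: "\<forall>y\<in>set r1. y \<noteq> x \<and> c y x" and "cancel c x r2 \<noteq> None" by auto
    have "cancel c x (rev r1 @ [x]) = Some (rev r1)"
      using cancel_commuting_prefix[of "rev r1" x c "[]"] ac by simp
    then have "cancel c x (rev (x # r1)) \<noteq> None" by simp
    then have "cancel c x r2 = None" by (rule mp[OF spec[OF Cons.prems(3), of x]])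
    then show False using \<open>cancel c x r2 \<noteq> None\<close> by simp
  qed
  then show ?case using r1 by simp
qed

section \<open>Projections onto pairs of dependent letters\<close>

definition dependent :: "('a \<Rightarrow> 'a \<Rightarrow> bool) \<Rightarrow> 'a \<Rightarrow> 'a \<Rightarrow> bool" where
  "dependent c a b = (a = b \<or> \<not> c a b)"

text \<open>As in the Cartier--Foata theory of trace monoids, these projections of reduced forms solve
  the word problem.\<close>
definition pair_proj :: "('a \<Rightarrow> 'a \<Rightarrow> bool) \<Rightarrow> 'a list \<Rightarrow> 'a \<Rightarrow> 'a \<Rightarrow> 'a list" where
  "pair_proj c r = (\<lambda>a b. if dependent c a b then filter (\<lambda>x. x = a \<or> x = b) r else [])"

definition proj_desc :: "('a \<Rightarrow> 'a \<Rightarrow> bool) \<Rightarrow> 'a \<Rightarrow> ('a \<Rightarrow> 'a \<Rightarrow> 'a list) \<Rightarrow> bool" where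
  "proj_desc c s K = (\<forall>b. dependent c s b \<longrightarrow> K s b \<noteq> [] \<and> hd (K s b) = s)"

definition proj_mul_gen ::
  "('a \<Rightarrow> 'a \<Rightarrow> bool) \<Rightarrow> 'a \<Rightarrow> ('a \<Rightarrow> 'a \<Rightarrow> 'a list) \<Rightarrow> 'a \<Rightarrow> 'a \<Rightarrow> 'a list" where
  "proj_mul_gen c s K = (\<lambda>a b. if dependent c a b \<and> (a = s \<or> b = s)
     then (if proj_desc c s K then tl (K a b) else s # K a b) else K a b)"

locale sym_comm =
  fixes c :: "'a \<Rightarrow> 'a \<Rightarrow> bool"
  assumes comm_sym: "c a b \<Longrightarrow> c b a"
begin

lemma dependent_sym: "dependent c a b = dependent c b a"
  using comm_sym unfolding dependent_def by blast

lemma pair_proj_sym: "pair_proj c r a b = pair_proj c r b a"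
  unfolding pair_proj_def by (auto simp: dependent_sym intro!: filter_cong)

lemma cancel_iff_proj_desc: "(cancel c s r \<noteq> None) = proj_desc c s (pair_proj c r)"
proof (induction r)
  case Nil
  then show ?case by (auto simp: proj_desc_def pair_proj_def dependent_def)
next
  case (Cons x xs)
  show ?case
  proof (cases "x = s")
    case True then show ?thesis by (auto simp: proj_desc_def pair_proj_def)
  next
    case False
    show ?thesis
    proof (cases "c x s")
      case True
      have "pair_proj c (x#xs) s b = pair_proj c xs s b" if "dependent c s b" for b
        using that True False comm_sym by (auto simp: pair_proj_def dependent_def)
      then have "proj_desc c s (pair_proj c (x#xs)) = proj_desc c s (pair_proj c xs)"
        unfolding proj_desc_def by auto
      then show ?thesis using Cons True False by simp
    next
      case nc: False
      have "dependent c s x" using nc comm_sym by (auto simp: dependent_def)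
      then have "pair_proj c (x#xs) s x = x # filter (\<lambda>y. y = s \<or> y = x) xs" by (simp add: pair_proj_def)
      then have "\<not> proj_desc c s (pair_proj c (x#xs))" using \<open>dependent c s x\<close> False unfolding proj_desc_def by force
      then show ?thesis using False nc by simp
    qed
  qed
qed

lemma pair_proj_cancel:
  assumes "cancel c s r = Some r'"
  shows "pair_proj c r' = (\<lambda>a b. if dependent c a b \<and> (a = s \<or> b = s) then tl (pair_proj c r a b) else pair_proj c r a b)"
proof -
  obtain pre post where d: "r = pre @ s # post" "r' = pre @ post" "\<forall>x\<in>set pre. x \<noteq> s \<and> c x s"
    using cancel_SomeD[OF assms] by blast
  have f0: "filter (\<lambda>x. x = a \<or> x = b) pre = []" if "dependent c a b" "a = s \<or> b = s" for a b
    using that d(3) comm_sym unfolding dependent_def by (auto simp: filter_empty_conv)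
  show ?thesis
    using d f0 by (auto simp: pair_proj_def fun_eq_iff)
qed

lemma pair_proj_mul_gen: "pair_proj c (mul_gen c s r) = proj_mul_gen c s (pair_proj c r)"
proof (cases "cancel c s r")
  case None
  then have nd: "\<not> proj_desc c s (pair_proj c r)" using cancel_iff_proj_desc[of s r] by simp
  show ?thesis unfolding mul_gen_def proj_mul_gen_def using None nd by (simp add: pair_proj_def fun_eq_iff)
next
  case (Some r')
  then have "proj_desc c s (pair_proj c r)" using cancel_iff_proj_desc by auto
  then show ?thesis using Some pair_proj_cancel[OF Some] by (auto simp: mul_gen_def proj_mul_gen_def fun_eq_iff)
qed

lemma proj_mul_gen_commute:
  assumes "c s t" "s \<noteq> t"
  shows "proj_mul_gen c s (proj_mul_gen c t K) = proj_mul_gen c t (proj_mul_gen c s K)"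
proof -
  have nd: "\<not> dependent c s t" "\<not> dependent c t s" using assms comm_sym by (auto simp: dependent_def)
  have d1: "proj_desc c s (proj_mul_gen c t K) = proj_desc c s K"
    unfolding proj_desc_def proj_mul_gen_def using nd assms by auto
  have d2: "proj_desc c t (proj_mul_gen c s K) = proj_desc c t K"
    unfolding proj_desc_def proj_mul_gen_def using nd assms by auto
  show ?thesis unfolding proj_mul_gen_def d1[unfolded proj_mul_gen_def] d2[unfolded proj_mul_gen_def]
    using nd by (auto simp: fun_eq_iff)
qed

end


lemma reduce_Cons: "reduce c (x # xs) = mul_gen c x (reduce c xs)"
  by (simp add: reduce_def)

lemma reduce_append: "reduce c (a @ b) = foldr (mul_gen c) a (reduce c b)"
  by (simp add: reduce_def)

lemma reduce_reduced: "reduced c r \<Longrightarrow> reduce c r = r"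
  by (induction r) (auto simp: reduce_def mul_gen_def)

lemma length_mul_gen: "length (mul_gen c s r) = Suc (length r) \<or> Suc (length (mul_gen c s r)) = length r"
  by (auto simp: mul_gen_def length_cancel split: option.splits)

lemma length_reduce_le: "length (reduce c xs) \<le> length xs"
proof (induction xs)
  case (Cons x xs) then show ?case using length_mul_gen[of c x "reduce c xs"] by (auto simp: reduce_Cons)
qed (simp add: reduce_def)

lemma length_reduce_less: "\<not> reduced c xs \<Longrightarrow> length (reduce c xs) < length xs"
proof (induction xs)
  case Nil then show ?case by simp
next
  case (Cons x xs)
  show ?case
  proof (cases "reduced c xs")
    case True
    then obtain r' where "cancel c x xs = Some r'" using Cons.prems by auto
    then show ?thesis using True by (simp add: reduce_Cons reduce_reduced mul_gen_def length_cancel)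
  next
    case False
    then show ?thesis using Cons.IH length_mul_gen[of c x "reduce c xs"] by (auto simp: reduce_Cons)
  qed
qed

lemma set_mul_gen: "set (mul_gen c s r) \<subseteq> insert s (set r)"
  by (auto simp: mul_gen_def dest: set_cancel split: option.splits)

lemma set_reduce: "set (reduce c xs) \<subseteq> set xs"
  by (induction xs) (auto simp: reduce_def dest!: set_mul_gen[THEN subsetD])

context sym_comm
begin

lemma cancel_None_after_cancel:
  assumes "cancel c s xs = Some xs'" "x \<noteq> s" "c x s" "cancel c x xs = None"
  shows "cancel c x xs' = None"
proof -
  have "c s x" using assms(3) comm_sym by blast
  obtain pre post where d: "xs = pre @ s # post" "xs' = pre @ post" "\<forall>y\<in>set pre. y \<noteq> s \<and> c y s"
    using cancel_SomeD[OF assms(1)] by blast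
  show ?thesis using assms(2-4) \<open>c s x\<close> unfolding d
    by (auto simp: cancel_append split: option.splits if_splits)
qed

lemma reduced_cancel:
  "cancel c s r = Some r' \<Longrightarrow> reduced c r \<Longrightarrow> reduced c r' \<and> cancel c s r' = None"
proof (induction r arbitrary: r')
  case Nil then show ?case by simp
next
  case (Cons x xs)
  show ?case
  proof (cases "x = s")
    case True then show ?thesis using Cons.prems by auto
  next
    case False
    with Cons.prems obtain r'' where h: "c x s" "cancel c s xs = Some r''" "r' = x # r''"
      by (auto split: if_splits)
    have "reduced c r'' \<and> cancel c s r'' = None" using Cons.IH[OF h(2)] Cons.prems by simp
    moreover have "cancel c x r'' = None" using cancel_None_after_cancel[OF h(2) False h(1)] Cons.prems by simp
    ultimately show ?thesis using h False by simp
  qed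
qed

lemma reduced_mul_gen: "reduced c r \<Longrightarrow> reduced c (mul_gen c s r)"
  using reduced_cancel[of s r] by (auto simp: mul_gen_def split: option.splits)

lemma reduced_reduce: "reduced c (reduce c xs)"
  by (induction xs) (auto simp: reduce_def reduced_mul_gen)


lemma pair_proj_mul_gen_twice:
  assumes "reduced c r"
  shows "pair_proj c (mul_gen c s (mul_gen c s r)) = pair_proj c r"
proof (cases "cancel c s r")
  case None
  then show ?thesis by (simp add: mul_gen_def)
next
  case (Some r')
  from reduced_cancel[OF Some assms] have n: "cancel c s r' = None" by simp
  have ds: "proj_desc c s (pair_proj c r)" using cancel_iff_proj_desc[of s r] Some by simp
  have "pair_proj c (s # r') = pair_proj c r"
  proof (rule ext, rule ext)
    fix a b
    show "pair_proj c (s # r') a b = pair_proj c r a b"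
    proof (cases "dependent c a b \<and> (a = s \<or> b = s)")
      case True
      have "pair_proj c r a b = pair_proj c r s (if a = s then b else a)" using True pair_proj_sym[of r a b] by (cases "a = s") simp_all
      moreover have "dependent c s (if a = s then b else a)" using True dependent_sym by auto
      ultimately have "pair_proj c r a b \<noteq> [] \<and> hd (pair_proj c r a b) = s" using ds unfolding proj_desc_def by auto
      then have "pair_proj c r a b = s # tl (pair_proj c r a b)" by (cases "pair_proj c r a b") auto
      moreover have "pair_proj c (s # r') a b = s # pair_proj c r' a b" using True by (auto simp: pair_proj_def)
      ultimately show ?thesis using pair_proj_cancel[OF Some] True by simp
    next
      case False
      have "pair_proj c r' a b = pair_proj c r a b" using pair_proj_cancel[OF Some] False by (simp only: if_False)
      moreover have "pair_proj c (s#r') a b = pair_proj c r' a b" using False by (auto simp: pair_proj_def)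
      ultimately show ?thesis by simp
    qed
  qed
  then show ?thesis using Some n by (simp add: mul_gen_def)
qed

lemma pair_proj_foldr_cong: "pair_proj c r1 = pair_proj c r2 \<Longrightarrow> pair_proj c (foldr (mul_gen c) a r1) = pair_proj c (foldr (mul_gen c) a r2)"
  by (induction a) (auto simp: pair_proj_mul_gen)

end

section \<open>Words for the right-angled Coxeter group\<close>

locale racg = sym_comm comm for comm :: "'a \<Rightarrow> 'a \<Rightarrow> bool" +
  fixes S :: "'a set"
  assumes finS: "finite S"
begin

abbreviation E where "E \<equiv> equivclp (cstep S comm)"

lemma pair_proj_reduce_cstep: "cstep S comm xs ys \<Longrightarrow> pair_proj comm (reduce comm xs) = pair_proj comm (reduce comm ys)"
proof (induction rule: cstep.induct)
  case (del s xs ys)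
  have "pair_proj comm (mul_gen comm s (mul_gen comm s (reduce comm ys))) = pair_proj comm (reduce comm ys)"
    by (rule pair_proj_mul_gen_twice[OF reduced_reduce])
  then have "pair_proj comm (foldr (mul_gen comm) xs (mul_gen comm s (mul_gen comm s (reduce comm ys)))) = pair_proj comm (foldr (mul_gen comm) xs (reduce comm ys))"
    by (rule pair_proj_foldr_cong)
  then show ?case unfolding reduce_append by simp
next
  case (swap s t xs ys)
  have "pair_proj comm (mul_gen comm s (mul_gen comm t (reduce comm ys))) = pair_proj comm (mul_gen comm t (mul_gen comm s (reduce comm ys)))"
    unfolding pair_proj_mul_gen using proj_mul_gen_commute[of s t] swap by metis
  then have "pair_proj comm (foldr (mul_gen comm) xs (mul_gen comm s (mul_gen comm t (reduce comm ys)))) = pair_proj comm (foldr (mul_gen comm) xs (mul_gen comm t (mul_gen comm s (reduce comm ys))))"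
    by (rule pair_proj_foldr_cong)
  then show ?case unfolding reduce_append by simp
qed

lemma pair_proj_reduce_eqv: "E xs ys \<Longrightarrow> pair_proj comm (reduce comm xs) = pair_proj comm (reduce comm ys)"
proof (induction rule: equivclp_induct)
  case base then show ?case by simp
next
  case (step y z) then show ?case using pair_proj_reduce_cstep by metis
qed

lemma cstep_set_subset: "cstep S comm xs ys \<Longrightarrow> set xs \<subseteq> S \<longleftrightarrow> set ys \<subseteq> S"
  by (induction rule: cstep.induct) auto

lemma eqv_set_subset: "E xs ys \<Longrightarrow> set xs \<subseteq> S \<longleftrightarrow> set ys \<subseteq> S"
  by (induction rule: equivclp_induct) (auto dest: cstep_set_subset)

lemma cstep_context: "cstep S comm xs ys \<Longrightarrow> cstep S comm (a @ xs @ b) (a @ ys @ b)"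
proof (induction rule: cstep.induct)
  case (del s xs ys) then show ?case using cstep.del[of s S comm "a @ xs" "ys @ b"] by simp
next
  case (swap s t xs ys) then show ?case using cstep.swap[of s S t comm "a @ xs" "ys @ b"] by simp
qed

lemma eqv_context: "E xs ys \<Longrightarrow> E (a @ xs @ b) (a @ ys @ b)"
proof (induction rule: equivclp_induct)
  case base then show ?case by simp
next
  case (step y z) then show ?case
    by (meson cstep_context equivclp_into_equivclp)
qed

lemma eqv_append: "E xs ys \<Longrightarrow> E us vs \<Longrightarrow> E (xs @ us) (ys @ vs)"
  using eqv_context[of xs ys "[]" us] eqv_context[of us vs ys "[]"] by (auto intro: equivclp_trans)

lemma cstep_rev: "cstep S comm xs ys \<Longrightarrow> cstep S comm (rev xs) (rev ys)"
proof (induction rule: cstep.induct)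
  case (del s xs ys) then show ?case using cstep.del[of s S comm "rev ys" "rev xs"] by simp
next
  case (swap s t xs ys) then show ?case using cstep.swap[of t S s comm "rev ys" "rev xs"] comm_sym by simp
qed

lemma eqv_rev: "E xs ys \<Longrightarrow> E (rev xs) (rev ys)"
proof (induction rule: equivclp_induct)
  case base then show ?case by simp
next
  case (step y z) then show ?case
    by (meson cstep_rev equivclp_into_equivclp)
qed

lemma eqv_move_commuting:
  "s \<in> S \<Longrightarrow> set pre \<subseteq> S \<Longrightarrow> \<forall>x\<in>set pre. x \<noteq> s \<and> comm x s \<Longrightarrow> E (s # pre @ v) (pre @ s # v)"
proof (induction pre)
  case Nil then show ?case by simp
next
  case (Cons x pre)
  have "cstep S comm ([] @ [s, x] @ pre @ v) ([] @ [x, s] @ pre @ v)"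
    using Cons.prems comm_sym by (intro cstep.swap) auto
  then have "E (s # x # pre @ v) (x # s # pre @ v)" by auto
  moreover have "E (x # s # pre @ v) (x # pre @ s # v)"
    using eqv_context[OF Cons.IH, of "[x]" "[]"] Cons.prems by simp
  ultimately show ?case by (auto intro: equivclp_trans)
qed

lemma eqv_cancel: "cancel comm s r = Some r' \<Longrightarrow> s \<in> S \<Longrightarrow> set r \<subseteq> S \<Longrightarrow> E (s # r) r'"
proof -
  assume a: "cancel comm s r = Some r'" "s \<in> S" "set r \<subseteq> S"
  obtain pre post where d: "r = pre @ s # post" "r' = pre @ post" "\<forall>x\<in>set pre. x \<noteq> s \<and> comm x s"
    using cancel_SomeD[OF a(1)] by blast
  have "E (s # pre @ s # post) (pre @ s # s # post)" using eqv_move_commuting[of s pre "s # post"] a d by auto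
  moreover have "cstep S comm (pre @ [s, s] @ post) (pre @ post)" using a by (intro cstep.del)
  ultimately show ?thesis unfolding d by (auto intro: equivclp_trans)
qed

lemma eqv_mul_gen: "s \<in> S \<Longrightarrow> set r \<subseteq> S \<Longrightarrow> E (mul_gen comm s r) (s # r)"
proof -
  assume a: "s \<in> S" "set r \<subseteq> S"
  show ?thesis
  proof (cases "cancel comm s r")
    case None then show ?thesis by (simp add: mul_gen_def)
  next
    case (Some r') then show ?thesis using eqv_cancel[OF Some a] by (simp add: mul_gen_def equivclp_sym)
  qed
qed

lemma eqv_reduce: "set xs \<subseteq> S \<Longrightarrow> E (reduce comm xs) xs"
proof (induction xs)
  case Nil then show ?case by (simp add: reduce_def)
next
  case (Cons x xs)
  have "set (reduce comm xs) \<subseteq> S" using set_reduce Cons.prems by fastforce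
  then have "E (mul_gen comm x (reduce comm xs)) (x # reduce comm xs)" using eqv_mul_gen Cons.prems by simp
  moreover have "E (x # reduce comm xs) (x # xs)" using eqv_context[OF Cons.IH, of "[x]" "[]"] Cons.prems by simp
  ultimately show ?case by (auto simp: reduce_Cons intro: equivclp_trans)
qed

lemma length_pair_proj: "set r \<subseteq> S \<Longrightarrow> length r = (\<Sum>a\<in>S. length (pair_proj comm r a a))"
proof -
  assume "set r \<subseteq> S"
  then have "length r = sum (count_list r) S" using sum_count_set finS by metis
  also have "\<dots> = (\<Sum>a\<in>S. length (pair_proj comm r a a))"
    by (intro sum.cong refl) (simp add: pair_proj_def dependent_def count_list_eq_length_filter eq_commute)
  finally show ?thesis .
qed

lemma length_reduce_eqv: "E xs ys \<Longrightarrow> set xs \<subseteq> S \<Longrightarrow> length (reduce comm xs) = length (reduce comm ys)"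
proof -
  assume a: "E xs ys" "set xs \<subseteq> S"
  then have "set ys \<subseteq> S" using eqv_set_subset by blast
  then show ?thesis using a length_pair_proj[of "reduce comm xs"] length_pair_proj[of "reduce comm ys"] pair_proj_reduce_eqv[OF a(1)]
      set_reduce[of comm xs] set_reduce[of comm ys] by auto
qed


abbreviation W where "W xs \<equiv> wcls S comm xs"
abbreviation L where "L xs \<equiv> wlen (W xs)"
abbreviation G where "G \<equiv> cox_group S comm"

lemma mem_W: "ys \<in> W xs \<longleftrightarrow> E xs ys"
  by (simp add: wcls_def)

lemma W_eq: "W xs = W ys \<longleftrightarrow> E xs ys"
proof
  assume "W xs = W ys"
  then show "E xs ys" using mem_W[of ys ys] mem_W[of ys xs] by simp
next
  assume "E xs ys"
  then show "W xs = W ys" unfolding wcls_def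
    by (auto intro: equivclp_trans equivclp_sym)
qed

lemma wmul_W: "wmul S comm (W a) (W b) = W (a @ b)"
proof (rule set_eqI)
  fix zs
  show "zs \<in> wmul S comm (W a) (W b) \<longleftrightarrow> zs \<in> W (a @ b)"
  proof
    assume "zs \<in> wmul S comm (W a) (W b)"
    then obtain xs ys where "E a xs" "E b ys" "E (xs @ ys) zs"
      unfolding wmul_def by (auto simp: mem_W)
    then show "zs \<in> W (a @ b)" unfolding mem_W by (meson eqv_append equivclp_trans)
  next
    assume "zs \<in> W (a @ b)"
    then have e: "E (a @ b) zs" using mem_W by blast
    have ab: "a \<in> W a" "b \<in> W b" by (auto simp: mem_W)
    show "zs \<in> wmul S comm (W a) (W b)" unfolding wmul_def using e ab by blast
  qed
qed

lemma winv_W: "winv (W a) = W (rev a)"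
proof (rule set_eqI)
  fix zs
  show "zs \<in> winv (W a) \<longleftrightarrow> zs \<in> W (rev a)"
  proof
    assume "zs \<in> winv (W a)"
    then show "zs \<in> W (rev a)" unfolding winv_def by (auto simp: mem_W dest: eqv_rev)
  next
    assume "zs \<in> W (rev a)"
    then have "E (rev (rev a)) (rev zs)" unfolding mem_W by (rule eqv_rev)
    then have "rev zs \<in> W a" unfolding mem_W by simp
    then have "rev (rev zs) \<in> rev ` W a" by (rule imageI)
    then show "zs \<in> winv (W a)" unfolding winv_def by simp
  qed
qed

lemma wgen_W: "wgen S comm s = W [s]" by (simp add: wgen_def)

lemma cox_group_iff: "u \<in> G \<longleftrightarrow> (\<exists>xs. set xs \<subseteq> S \<and> u = W xs)"
  unfolding cox_group_def by (auto simp: in_lists_conv_set)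

lemma len_reduce: "set xs \<subseteq> S \<Longrightarrow> L xs = length (reduce comm xs)"
  unfolding wlen_def
proof (rule Least_equality)
  assume "set xs \<subseteq> S"
  then have "reduce comm xs \<in> W xs" using eqv_reduce[of xs] mem_W equivclp_sym by metis
  then show "\<exists>ys\<in>W xs. length ys = length (reduce comm xs)" by blast
next
  fix n assume a: "set xs \<subseteq> S" "\<exists>ys\<in>W xs. length ys = n"
  then obtain ys where "E xs ys" "length ys = n" by (auto simp: mem_W)
  then show "length (reduce comm xs) \<le> n"
    using length_reduce_eqv[of xs ys] a length_reduce_le[of comm ys] by simp
qed

lemma len_eqv: "E xs ys \<Longrightarrow> L xs = L ys"
proof -
  assume "E xs ys"
  then have "W xs = W ys" using W_eq by blast
  then show ?thesis by simp
qed

lemma len_le_length: "set xs \<subseteq> S \<Longrightarrow> L xs \<le> length xs"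
  using len_reduce length_reduce_le by metis

lemma len_reduced: "set r \<subseteq> S \<Longrightarrow> reduced comm r \<Longrightarrow> L r = length r"
  using len_reduce reduce_reduced by metis

lemma reduced_if_len: "set r \<subseteq> S \<Longrightarrow> L r = length r \<Longrightarrow> reduced comm r"
  using len_reduce length_reduce_less by fastforce

lemma set_reduce_subset: "set xs \<subseteq> S \<Longrightarrow> set (reduce comm xs) \<subseteq> S"
  using set_reduce by fastforce

lemma len_Cons_cases: "set xs \<subseteq> S \<Longrightarrow> s \<in> S \<Longrightarrow> L (s # xs) = Suc (L xs) \<or> Suc (L (s # xs)) = L xs"
  using len_reduce[of xs] len_reduce[of "s # xs"] length_mul_gen[of comm s "reduce comm xs"] by (simp add: reduce_Cons)

lemma len_append_le: "set a \<subseteq> S \<Longrightarrow> set b \<subseteq> S \<Longrightarrow> L (a @ b) \<le> L a + L b"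
proof -
  assume a: "set a \<subseteq> S" "set b \<subseteq> S"
  have "E (a @ b) (reduce comm a @ reduce comm b)"
    using eqv_append[OF equivclp_sym[OF eqv_reduce] equivclp_sym[OF eqv_reduce]] a by blast
  then have "L (a @ b) = L (reduce comm a @ reduce comm b)" by (rule len_eqv)
  also have "\<dots> \<le> length (reduce comm a @ reduce comm b)" using len_le_length[of "reduce comm a @ reduce comm b"] set_reduce_subset[of a] set_reduce_subset[of b] a by simp
  finally show ?thesis using len_reduce a by simp
qed

lemma len_rev_le: "set xs \<subseteq> S \<Longrightarrow> L (rev xs) \<le> L xs"
proof -
  assume a: "set xs \<subseteq> S"
  have "L (rev xs) = L (rev (reduce comm xs))" using eqv_rev[OF eqv_reduce[OF a]] len_eqv by metis
  also have "\<dots> \<le> length (reduce comm xs)" using len_le_length[of "rev (reduce comm xs)"] set_reduce_subset[of xs] a by simp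
  finally show ?thesis using len_reduce a by simp
qed

lemma len_rev: "set xs \<subseteq> S \<Longrightarrow> L (rev xs) = L xs"
  using len_rev_le[of xs] len_rev_le[of "rev xs"] by simp

lemma cox_group_reduced_word: "u \<in> G \<Longrightarrow> \<exists>r. set r \<subseteq> S \<and> reduced comm r \<and> u = W r"
proof -
  assume "u \<in> G"
  then obtain xs where "set xs \<subseteq> S" "u = W xs" using cox_group_iff by blast
  moreover have "W (reduce comm xs) = W xs" using eqv_reduce[of xs] W_eq \<open>set xs \<subseteq> S\<close> by blast
  ultimately show ?thesis using reduced_reduce[of xs] set_reduce_subset[of xs] by metis
qed

lemma len_Cons_reduced: "s \<in> S \<Longrightarrow> set r \<subseteq> S \<Longrightarrow> reduced comm r \<Longrightarrow>
   L (s # r) = (case cancel comm s r of None \<Rightarrow> Suc (length r) | Some r' \<Rightarrow> length r')"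
  using len_reduce[of "s # r"] by (simp add: reduce_Cons reduce_reduced mul_gen_def split: option.splits)

lemma descent_reduced_iff: "s \<in> S \<Longrightarrow> set r \<subseteq> S \<Longrightarrow> reduced comm r \<Longrightarrow>
   (L (s # r) < L r \<longleftrightarrow> cancel comm s r \<noteq> None)"
proof -
  assume a: "s \<in> S" "set r \<subseteq> S" "reduced comm r"
  show ?thesis
  proof (cases "cancel comm s r")
    case None then show ?thesis using len_Cons_reduced[OF a] len_reduced[OF a(2,3)] by simp
  next
    case (Some r') then show ?thesis using len_Cons_reduced[OF a] len_reduced[OF a(2,3)] length_cancel[OF Some] by simp
  qed
qed

lemma ascent_reduced_iff: "s \<in> S \<Longrightarrow> set r \<subseteq> S \<Longrightarrow> reduced comm r \<Longrightarrow>
   (L (s # r) = Suc (L r) \<longleftrightarrow> cancel comm s r = None)"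
proof -
  assume a: "s \<in> S" "set r \<subseteq> S" "reduced comm r"
  show ?thesis
  proof (cases "cancel comm s r")
    case None then show ?thesis using len_Cons_reduced[OF a] len_reduced[OF a(2,3)] by simp
  next
    case (Some r') then show ?thesis using len_Cons_reduced[OF a] len_reduced[OF a(2,3)] length_cancel[OF Some] by simp
  qed
qed


lemma cancel_both_commute: "cancel comm a r \<noteq> None \<Longrightarrow> cancel comm b r \<noteq> None \<Longrightarrow> a \<noteq> b \<Longrightarrow> comm a b"
proof (induction r)
  case Nil then show ?case by simp
next
  case (Cons x r)
  show ?case
  proof (cases "x = a")
    case True then show ?thesis using Cons.prems by (auto split: if_splits)
  next
    case False
    show ?thesis
    proof (cases "x = b")
      case True then show ?thesis using Cons.prems False comm_sym by (auto split: if_splits)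
    next
      case False2: False
      then show ?thesis using Cons False by (auto split: if_splits)
    qed
  qed
qed

lemma gens_commute_iff: "s \<in> S \<Longrightarrow> t \<in> S \<Longrightarrow> (W [s, t] = W [t, s]) \<longleftrightarrow> (s = t \<or> comm s t)"
proof
  assume a: "s \<in> S" "t \<in> S" "W [s, t] = W [t, s]"
  show "s = t \<or> comm s t"
  proof (rule ccontr)
    assume n: "\<not> (s = t \<or> comm s t)"
    then have n2: "\<not> comm t s" using comm_sym by blast
    have "E [s, t] [t, s]" using a W_eq by blast
    then have k: "pair_proj comm (reduce comm [s, t]) = pair_proj comm (reduce comm [t, s])" by (rule pair_proj_reduce_eqv)
    have "reduce comm [s, t] = [s, t]" using n n2 by (auto simp: reduce_def mul_gen_def)
    moreover have "reduce comm [t, s] = [t, s]" using n n2 by (auto simp: reduce_def mul_gen_def)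
    ultimately have "pair_proj comm [s, t] s t = pair_proj comm [t, s] s t" using k by simp
    then show False using n by (simp add: pair_proj_def dependent_def)
  qed
next
  assume a: "s \<in> S" "t \<in> S" "s = t \<or> comm s t"
  show "W [s, t] = W [t, s]"
  proof (cases "s = t")
    case True then show ?thesis by simp
  next
    case False
    then have "cstep S comm ([] @ [s, t] @ []) ([] @ [t, s] @ [])" using a by (intro cstep.swap) auto
    then show ?thesis using W_eq by auto
  qed
qed

lemma eqv_double: "s \<in> S \<Longrightarrow> E (s # s # r) r"
  using cstep.del[of s S comm "[]" r] by auto

lemma eqv_cancel_rev: "set xs \<subseteq> S \<Longrightarrow> E (xs @ rev xs @ y) y"
proof (induction xs arbitrary: y)
  case Nil then show ?case by simp
next
  case (Cons x xs)
  have "E (xs @ rev xs @ (x # y)) (x # y)" using Cons by simp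
  then have "E (x # xs @ rev xs @ (x # y)) (x # x # y)" using eqv_context[of _ _ "[x]" "[]"] by simp
  moreover have "E (x # x # y) y" using eqv_double Cons.prems by simp
  ultimately show ?case by (auto intro: equivclp_trans)
qed

lemma commuting_of_eq_Cons_snoc:
  assumes "s \<in> S" "set r \<subseteq> S" "reduced comm r" "cancel comm s r = None" "W (s # r) = W (r @ [s])"
  shows "\<forall>x\<in>set r. x \<noteq> s \<and> comm x s"
proof -
  have e: "E (s # r) (r @ [s])" using assms(5) W_eq by blast
  have "L (s # r) = Suc (length r)" using ascent_reduced_iff[OF assms(1-3)] assms(4) len_reduced[OF assms(2,3)] by simp
  then have "L (r @ [s]) = length (r @ [s])" using len_eqv[OF e] by simp
  then have snoc_reduced: "reduced comm (r @ [s])" using reduced_if_len[of "r @ [s]"] assms by simp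
  have "E (s # r @ [s]) (s # s # r)" using eqv_context[OF equivclp_sym[OF e], of "[s]" "[]"] by simp
  then have "E (s # r @ [s]) r" using eqv_double[OF assms(1)] by (blast intro: equivclp_trans)
  then have "L (s # r @ [s]) < L (r @ [s])"
    using len_eqv len_reduced[OF assms(2,3)] \<open>L (r @ [s]) = length (r @ [s])\<close> by simp
  then have "cancel comm s (r @ [s]) \<noteq> None" using descent_reduced_iff[of s "r @ [s]"] assms snoc_reduced by simp
  then show ?thesis using cancel_append_NoneD[OF assms(4)] by blast
qed

abbreviation descent where "descent t z \<equiv> L (t # z) < L z"

lemma descent_eqv: "E z1 z2 \<Longrightarrow> descent t z1 \<longleftrightarrow> descent t z2"
  using len_eqv[of z1 z2] len_eqv[of "t # z1" "t # z2"] eqv_context[of z1 z2 "[t]" "[]"] by simp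

lemma descent_iff_cancel_reduce: "set z \<subseteq> S \<Longrightarrow> t \<in> S \<Longrightarrow> descent t z \<longleftrightarrow> cancel comm t (reduce comm z) \<noteq> None"
proof -
  assume a: "set z \<subseteq> S" "t \<in> S"
  have "descent t z \<longleftrightarrow> descent t (reduce comm z)" using descent_eqv[OF eqv_reduce[OF a(1)]] by simp
  then show ?thesis using descent_reduced_iff[OF a(2) set_reduce_subset[OF a(1)] reduced_reduce] by simp
qed

lemma descent_iff_cancel: "set z \<subseteq> S \<Longrightarrow> t \<in> S \<Longrightarrow> reduced comm z \<Longrightarrow> descent t z \<longleftrightarrow> cancel comm t z \<noteq> None"
  using descent_reduced_iff by simp

lemma descent_Cons_commuting:
  assumes "t \<in> S" "s \<in> S" "t \<noteq> s" "comm t s" "set z \<subseteq> S"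
  shows "descent t (s # z) \<longleftrightarrow> descent t z"
proof -
  define r where "r = reduce comm z"
  have r: "set r \<subseteq> S" "reduced comm r" "E r z" using set_reduce_subset[OF assms(5)] reduced_reduce eqv_reduce[OF assms(5)] by (auto simp: r_def)
  have e1: "descent t (s # z) \<longleftrightarrow> descent t (s # r)" using descent_eqv[of "s # r" "s # z" t] eqv_context[OF r(3), of "[s]" "[]"] by simp
  have e2: "descent t z \<longleftrightarrow> descent t r" using descent_eqv[OF r(3)] by simp
  have cs: "comm s t" using assms(4) comm_sym by blast
  show ?thesis
  proof (cases "cancel comm s r")
    case None
    then have "reduced comm (s # r)" using r by simp
    then have "descent t (s # r) \<longleftrightarrow> cancel comm t (s # r) \<noteq> None" using descent_iff_cancel[of "s # r" t] r assms by simp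
    also have "\<dots> \<longleftrightarrow> cancel comm t r \<noteq> None" using cs assms(3) by simp
    also have "\<dots> \<longleftrightarrow> descent t r" using descent_iff_cancel[of r t] r assms by simp
    finally show ?thesis using e1 e2 by simp
  next
    case (Some r')
    have r': "reduced comm r'" "cancel comm s r' = None" using reduced_cancel[OF Some r(2)] by auto
    have sr': "set r' \<subseteq> S" using set_cancel[OF Some] r by auto
    have es: "E (s # r) r'" using eqv_cancel[OF Some assms(2) r(1)] .
    have "E (s # r') (s # s # r)" using eqv_context[OF equivclp_sym[OF es], of "[s]" "[]"] by simp
    then have es2: "E (s # r') r" using eqv_double[OF assms(2)] by (blast intro: equivclp_trans)
    have "descent t (s # r) \<longleftrightarrow> descent t r'" using descent_eqv[OF es] .
    also have "\<dots> \<longleftrightarrow> cancel comm t r' \<noteq> None" using descent_iff_cancel[of r' t] r' sr' assms by simp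
    also have "\<dots> \<longleftrightarrow> cancel comm t (s # r') \<noteq> None" using cs assms(3) by simp
    also have "\<dots> \<longleftrightarrow> descent t (s # r')" using descent_iff_cancel[of "s # r'" t] r' sr' assms by simp
    also have "\<dots> \<longleftrightarrow> descent t r" using descent_eqv[OF es2] .
    finally show ?thesis using e1 e2 by simp
  qed
qed

lemma len_rev_append_ge: "set xs \<subseteq> S \<Longrightarrow> set z \<subseteq> S \<Longrightarrow> L z \<le> length xs + L (rev xs @ z)"
proof -
  assume a: "set xs \<subseteq> S" "set z \<subseteq> S"
  have "L z = L (xs @ rev xs @ z)" using len_eqv[OF eqv_cancel_rev[OF a(1), of z]] by simp
  also have "\<dots> \<le> L xs + L (rev xs @ z)" using len_append_le[of xs "rev xs @ z"] a by simp
  also have "\<dots> \<le> length xs + L (rev xs @ z)" using len_le_length[OF a(1)] by simp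
  finally show ?thesis .
qed

lemma len_clique_prefix_iff:
  assumes "distinct cl" "set cl \<subseteq> S" "\<forall>x\<in>set cl. \<forall>y\<in>set cl. x \<noteq> y \<longrightarrow> comm x y" "set z \<subseteq> S"
  shows "int (L (rev cl @ z)) = int (L z) - int (length cl) \<longleftrightarrow> (\<forall>t\<in>set cl. descent t z)"
  using assms
proof (induction cl arbitrary: z)
  case Nil then show ?case by simp
next
  case (Cons t cl)
  have tS: "t \<in> S" and clS: "set cl \<subseteq> S" using Cons.prems by auto
  have eq: "rev (t # cl) @ z = rev cl @ (t # z)" by simp
  have IH: "int (L (rev cl @ (t # z))) = int (L (t # z)) - int (length cl) \<longleftrightarrow> (\<forall>t'\<in>set cl. descent t' (t # z))"
    using Cons.IH[of "t # z"] Cons.prems by auto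
  have lc: "\<forall>t'\<in>set cl. descent t' (t # z) \<longleftrightarrow> descent t' z"
  proof
    fix t' assume "t' \<in> set cl"
    then have "t' \<noteq> t" "comm t' t" "t' \<in> S" using Cons.prems by auto
    then show "descent t' (t # z) \<longleftrightarrow> descent t' z" using descent_Cons_commuting tS Cons.prems(4) by blast
  qed
  show ?case
  proof
    assume h: "int (L (rev (t # cl) @ z)) = int (L z) - int (length (t # cl))"
    have ge: "L (t # z) \<le> length cl + L (rev cl @ (t # z))" using len_rev_append_ge[of cl "t # z"] clS tS Cons.prems by simp
    then have "L (t # z) < L z" using h eq by simp
    moreover then have "L (t # z) = L z - 1" using len_Cons_cases[of z t] tS Cons.prems by auto
    ultimately have "int (L (rev cl @ (t # z))) = int (L (t # z)) - int (length cl)" using h eq by simp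
    then show "\<forall>t'\<in>set (t # cl). descent t' z" using IH lc \<open>L (t # z) < L z\<close> by auto
  next
    assume h: "\<forall>t'\<in>set (t # cl). descent t' z"
    then have "descent t z" by simp
    then have l: "L (t # z) = L z - 1" using len_Cons_cases[of z t] tS Cons.prems by auto
    have "\<forall>t'\<in>set cl. descent t' (t # z)" using h lc by auto
    then have "int (L (rev cl @ (t # z))) = int (L (t # z)) - int (length cl)" using IH by simp
    then show "int (L (rev (t # cl) @ z)) = int (L z) - int (length (t # cl))" using l eq \<open>descent t z\<close> by simp
  qed
qed

lemma eqv_clique_perm:
  assumes "distinct cl1" "distinct cl2" "set cl1 = set cl2" "set cl1 \<subseteq> S"
    "\<forall>x\<in>set cl1. \<forall>y\<in>set cl1. x \<noteq> y \<longrightarrow> comm x y"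
  shows "E cl1 cl2"
  using assms
proof (induction cl1 arbitrary: cl2)
  case Nil then show ?case by simp
next
  case (Cons x xs)
  have xin: "x \<in> set cl2" using Cons.prems(3) by auto
  obtain pre post where d: "cl2 = pre @ x # post" using split_list[OF xin] by blast
  have px: "\<forall>y\<in>set pre. y \<noteq> x \<and> comm y x"
  proof
    fix y assume y: "y \<in> set pre"
    then have "y \<noteq> x" using Cons.prems(2) d by auto
    moreover have "y \<in> set (x # xs)" using y d Cons.prems(3) by simp
    ultimately show "y \<noteq> x \<and> comm y x" using Cons.prems(5) by simp
  qed
  have xS: "x \<in> S" and preS: "set pre \<subseteq> S" using Cons.prems(3,4) d by auto
  have e1: "E (x # pre @ post) (pre @ x # post)" using eqv_move_commuting[OF xS preS px] .
  have s1: "set xs = set cl2 - {x}" using Cons.prems(1,3) by auto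
  have s2: "set (pre @ post) = set cl2 - {x}" using Cons.prems(2) d by auto
  have "E xs (pre @ post)"
  proof (rule Cons.IH)
    show "distinct xs" using Cons.prems(1) by simp
    show "distinct (pre @ post)" using Cons.prems(2) d by simp
    show "set xs = set (pre @ post)" using s1 s2 by simp
    show "set xs \<subseteq> S" using Cons.prems(4) by simp
    show "\<forall>x\<in>set xs. \<forall>y\<in>set xs. x \<noteq> y \<longrightarrow> comm x y" using Cons.prems(5) by simp
  qed
  then have "E (x # xs) (x # pre @ post)" using eqv_context[of xs "pre @ post" "[x]" "[]"] by simp
  then show ?case unfolding d using e1 by (blast intro: equivclp_trans)
qed

lemma clique_prodE:
  assumes "is_clique S comm C"
  obtains cl where "clique_prod S comm C = W cl" "distinct cl" "set cl = C"
proof -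
  have "finite C" using assms finS finite_subset unfolding is_clique_def by blast
  then have "\<exists>xs. distinct xs \<and> set xs = C" using finite_distinct_list by blast
  then have "distinct (SOME xs. distinct xs \<and> set xs = C) \<and> set (SOME xs. distinct xs \<and> set xs = C) = C"
    by (rule someI_ex)
  then show ?thesis using that unfolding clique_prod_def by blast
qed

lemma clique_prod_eq:
  assumes "is_clique S comm C" "distinct cl" "set cl = C"
  shows "clique_prod S comm C = W cl"
proof -
  obtain cl' where c: "clique_prod S comm C = W cl'" "distinct cl'" "set cl' = C" using clique_prodE[OF assms(1)] .
  have "E cl' cl" using eqv_clique_perm[of cl' cl] c assms unfolding is_clique_def by auto
  then show ?thesis using c W_eq by simp
qed


lemma len_reduced_parts:
  assumes "reduced comm (a @ b @ c)" "set a \<subseteq> S" "set b \<subseteq> S" "set c \<subseteq> S"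
  shows "L a = length a" "L b = length b" "L c = length c"
proof -
  have l: "L (a @ b @ c) = length a + length b + length c" using len_reduced[OF _ assms(1)] assms by simp
  have "L (a @ b @ c) \<le> L a + L (b @ c)" using len_append_le[of a "b @ c"] assms by simp
  also have "\<dots> \<le> L a + (L b + L c)" using len_append_le[of b c] assms by simp
  finally have "length a + length b + length c \<le> L a + L b + L c" using l by simp
  moreover have "L a \<le> length a" "L b \<le> length b" "L c \<le> length c" using len_le_length assms by auto
  ultimately show "L a = length a" "L b = length b" "L c = length c" by auto
qed

lemma right_ascent_iff: "set r \<subseteq> S \<Longrightarrow> t \<in> S \<Longrightarrow> reduced comm r \<Longrightarrow>
   (L r < L (r @ [t]) \<longleftrightarrow> cancel comm t (rev r) = None)"
proof -
  assume a: "set r \<subseteq> S" "t \<in> S" "reduced comm r"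
  have rr: "reduced comm (rev r)" using reduced_if_len[of "rev r"] len_rev[of r] len_reduced[OF a(1,3)] a by simp
  have "L (r @ [t]) = L (t # rev r)" using len_rev[of "r @ [t]"] a by simp
  moreover have "L r = L (rev r)" using len_rev a by simp
  ultimately have "L r < L (r @ [t]) \<longleftrightarrow> \<not> descent t (rev r)" using len_Cons_cases[of "rev r" t] a by auto
  then show ?thesis using descent_reduced_iff[OF a(2) _ rr] a by simp
qed

lemma wgen_commute_iff:
  "t \<in> S \<Longrightarrow> u \<in> S \<Longrightarrow>
   wmul S comm (wgen S comm t) (wgen S comm u) = wmul S comm (wgen S comm u) (wgen S comm t) \<longleftrightarrow>
   t = u \<or> comm t u"
  using gens_commute_iff[of t u] by (simp add: wgen_W wmul_W)

lemma reduced_eqv: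
  "reduced comm x \<Longrightarrow> E x y \<Longrightarrow> set x \<subseteq> S \<Longrightarrow> length y = length x \<Longrightarrow> reduced comm y"
  using len_eqv[of x y] len_reduced[of x] reduced_if_len[of y] eqv_set_subset[of x y] by simp

lemma W_move_commuting:
  "s \<in> S \<Longrightarrow> set pre \<subseteq> S \<Longrightarrow> \<forall>x\<in>set pre. x \<noteq> s \<and> comm x s \<Longrightarrow> W (s # pre @ v) = W (pre @ s # v)"
  using eqv_move_commuting W_eq by blast

lemma descents_commute:
  assumes "set z \<subseteq> S" "a \<in> S" "b \<in> S" "descent a z" "descent b z"
  shows "a = b \<or> comm a b"
  using assms cancel_both_commute[of a "reduce comm z" b] descent_iff_cancel_reduce by auto

section \<open>Words describing the index set\<close>

text \<open>Words \<open>r1\<close>, \<open>cl\<close>, \<open>r2\<close> spelling out a triple \<open>(W r1, set cl, W r2)\<close> of \<open>A_set\<close> for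
  \<open>W r\<close>; condition (3) is expressed as: no generator commuting with the clique cancels
  against the right end of \<open>r1\<close>.\<close>
definition A_words :: "'a list \<Rightarrow> 'a list \<Rightarrow> 'a list \<Rightarrow> 'a list \<Rightarrow> bool" where
  "A_words r r1 cl r2 \<longleftrightarrow> set r1 \<subseteq> S \<and> set r2 \<subseteq> S \<and> distinct cl \<and> is_clique S comm (set cl) \<and>
     reduced comm (r1 @ cl @ r2) \<and> E r (r1 @ cl @ r2) \<and>
     (\<forall>t\<in>S. (\<forall>u\<in>set cl. t = u \<or> comm t u) \<longrightarrow> cancel comm t (rev r1) = None)"

lemma A_wordsD:
  assumes "A_words r r1 cl r2"
  shows "set r1 \<subseteq> S" "set cl \<subseteq> S" "set r2 \<subseteq> S" "reduced comm r1" "reduced comm r2"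
    "clique_prod S comm (set cl) = W cl"
proof -
  show r1S: "set r1 \<subseteq> S" and r2S: "set r2 \<subseteq> S" using assms by (simp_all add: A_words_def)
  show clS: "set cl \<subseteq> S" using assms by (simp add: A_words_def is_clique_def)
  have "reduced comm (r1 @ cl @ r2)" using assms by (simp add: A_words_def)
  from len_reduced_parts[OF this r1S clS r2S]
  show "reduced comm r1" "reduced comm r2" using reduced_if_len[OF r1S] reduced_if_len[OF r2S] by blast+
  show "clique_prod S comm (set cl) = W cl" using assms clique_prod_eq by (simp add: A_words_def)
qed

lemma A_words_length:
  assumes "A_words r r1 cl r2"
  shows "length r1 + length cl + length r2 = L r"
proof -
  have "E r (r1 @ cl @ r2)" "reduced comm (r1 @ cl @ r2)" using assms by (simp_all add: A_words_def)
  then show ?thesis using len_eqv len_reduced[of "r1 @ cl @ r2"] A_wordsD(1-3)[OF assms] by fastforce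
qed

lemma A_words_right_ascent:
  assumes "A_words r r1 cl r2" "t \<in> S" "\<forall>u\<in>set cl. t = u \<or> comm t u"
  shows "L r1 < L (r1 @ [t])"
  using assms right_ascent_iff[OF A_wordsD(1)[OF assms(1)] assms(2) A_wordsD(4)[OF assms(1)]]
  by (simp add: A_words_def)

lemma A_setI:
  assumes "A_words r r1 cl r2"
  shows "(W r1, set cl, W r2) \<in> A_set S comm (W r)"
proof -
  note w = A_wordsD[OF assms]
  have cq: "is_clique S comm (set cl)" and e: "E r (r1 @ cl @ r2)" and red: "reduced comm (r1 @ cl @ r2)"
    using assms by (auto simp: A_words_def)
  have lens: "L r1 = length r1" "L cl = length cl" "L r2 = length r2"
    using len_reduced_parts[OF red w(1-3)] by auto
  have "W r = wmul S comm (wmul S comm (W r1) (clique_prod S comm (set cl))) (W r2)"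
    using w(6) e W_eq by (simp add: wmul_W)
  moreover have "wlen (W r) = wlen (W r1) + wlen (clique_prod S comm (set cl)) + wlen (W r2)"
    using A_words_length[OF assms] w(6) lens by simp
  moreover have "wlen (W r1) < wlen (wmul S comm (W r1) (wgen S comm t))"
    if t: "t \<in> S" "\<forall>u\<in>set cl. wmul S comm (wgen S comm t) (wgen S comm u)
                                 = wmul S comm (wgen S comm u) (wgen S comm t)" for t
  proof -
    have "\<forall>u\<in>set cl. t = u \<or> comm t u" using t wgen_commute_iff w(2) by blast
    then show ?thesis using A_words_right_ascent[OF assms t(1)] by (simp add: wgen_W wmul_W)
  qed
  moreover have "W r1 \<in> G" "W r2 \<in> G" using w cox_group_iff by auto
  ultimately show ?thesis unfolding A_set_def using cq by blast
qed

lemma A_setE: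
  assumes "b \<in> A_set S comm (W r)" "set r \<subseteq> S"
  obtains r1 cl r2 where "b = (W r1, set cl, W r2)" "A_words r r1 cl r2"
proof -
  obtain w' C w'' where b: "b = (w', C, w'')" by (cases b)
  from assms(1) have a: "w' \<in> G" "w'' \<in> G" "is_clique S comm C"
    "W r = wmul S comm (wmul S comm w' (clique_prod S comm C)) w''"
    "wlen (W r) = wlen w' + wlen (clique_prod S comm C) + wlen w''"
    "\<forall>t\<in>S. (\<forall>u\<in>C. wmul S comm (wgen S comm t) (wgen S comm u) = wmul S comm (wgen S comm u) (wgen S comm t))
       \<longrightarrow> wlen w' < wlen (wmul S comm w' (wgen S comm t))"
    unfolding b A_set_def by auto
  obtain r1 where r1: "set r1 \<subseteq> S" "reduced comm r1" "w' = W r1"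
    using cox_group_reduced_word[OF a(1)] by blast
  obtain r2 where r2: "set r2 \<subseteq> S" "reduced comm r2" "w'' = W r2"
    using cox_group_reduced_word[OF a(2)] by blast
  obtain cl where cl: "clique_prod S comm C = W cl" "distinct cl" "set cl = C"
    using clique_prodE[OF a(3)] by blast
  have clS: "set cl \<subseteq> S" using cl a(3) unfolding is_clique_def by simp
  have e: "E r (r1 @ cl @ r2)" using a(4) r1 r2 cl W_eq by (simp add: wmul_W)
  have "L r = length r1 + length cl + length r2"
    using a(5) r1 r2 cl len_reduced distinct_reduced[OF cl(2)] clS by simp
  then have "L (r1 @ cl @ r2) = length (r1 @ cl @ r2)" using len_eqv[OF e] by simp
  then have red: "reduced comm (r1 @ cl @ r2)" using reduced_if_len r1 r2 clS by simp
  have asc: "cancel comm t (rev r1) = None" if t: "t \<in> S" "\<forall>u\<in>C. t = u \<or> comm t u" for t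
  proof -
    have "\<forall>u\<in>C. wmul S comm (wgen S comm t) (wgen S comm u) = wmul S comm (wgen S comm u) (wgen S comm t)"
      using t wgen_commute_iff cl clS by blast
    then have "L r1 < L (r1 @ [t])" using a(6) t r1 by (simp add: wgen_W wmul_W)
    then show ?thesis using right_ascent_iff r1 t by simp
  qed
  have "A_words r r1 cl r2" unfolding A_words_def using r1 r2 cl a(3) red e asc by auto
  then show ?thesis using that b r1(3) r2(3) cl(3) by blast
qed

lemma finite_A_set:
  assumes "set r \<subseteq> S"
  shows "finite (A_set S comm (W r))"
proof -
  define B where "B = {xs. set xs \<subseteq> S \<and> length xs \<le> length r}"
  have "A_set S comm (W r) \<subseteq> (W ` B) \<times> Pow S \<times> (W ` B)"
  proof
    fix b assume "b \<in> A_set S comm (W r)"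
    then obtain r1 cl r2 where b: "b = (W r1, set cl, W r2)" and A: "A_words r r1 cl r2"
      using assms by (rule A_setE)
    have "length r1 + length cl + length r2 \<le> length r"
      using A_words_length[OF A] len_le_length[OF assms] by simp
    then show "b \<in> (W ` B) \<times> Pow S \<times> (W ` B)" using A_wordsD[OF A] b unfolding B_def by auto
  qed
  moreover have "finite B" unfolding B_def using finite_lists_length_le[OF finS] .
  ultimately show ?thesis using finS by (meson finite_SigmaI finite_Pow_iff finite_imageI finite_subset)
qed

text \<open>If every letter of the clique is a left descent of \<open>r1\<inverse> z\<close>, then \<open>z = r1 \<cdot> r1\<inverse> z\<close>
  is length-additive, so the left descents of \<open>z\<close> can be read off this factorisation.\<close>
lemma descent_via_clique_descents:
  assumes A: "A_words r r1 cl r2" and zS: "set z \<subseteq> S" and a: "a \<in> S"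
    and cl_desc: "\<forall>u\<in>set cl. descent u (rev r1 @ z)"
  shows "descent a z \<longleftrightarrow> cancel comm a (r1 @ reduce comm (rev r1 @ z)) \<noteq> None"
proof -
  note w = A_wordsD[OF A]
  define y where "y = rev r1 @ z"
  have yS: "set y \<subseteq> S" using w(1) zS unfolding y_def by auto
  define ry where "ry = reduce comm y"
  have ryS: "set ry \<subseteq> S" and ry_red: "reduced comm ry" and ry_eqv: "E ry y"
    using set_reduce_subset[OF yS] reduced_reduce eqv_reduce[OF yS] unfolding ry_def by auto
  have "cancel comm b ry = None" if b: "cancel comm b (rev r1) \<noteq> None" for b
  proof (rule ccontr)
    assume b_ry: "cancel comm b ry \<noteq> None"
    have bS: "b \<in> S" using cancel_mem[OF b_ry] ryS by auto
    have "descent b y" using b_ry descent_iff_cancel_reduce[OF yS bS] unfolding ry_def by simp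
    then have "\<forall>u\<in>set cl. b = u \<or> comm b u"
      using descents_commute[OF yS bS] cl_desc w(2) unfolding y_def by blast
    then show False using A b bS by (simp add: A_words_def)
  qed
  then have red: "reduced comm (r1 @ ry)" using reduced_append[OF w(4) ry_red] by blast
  have "E (r1 @ ry) (r1 @ y)" using eqv_context[OF ry_eqv, of r1 "[]"] by simp
  moreover have "E (r1 @ y) z" unfolding y_def using eqv_cancel_rev[OF w(1)] by simp
  ultimately have "descent a z \<longleftrightarrow> descent a (r1 @ ry)" using descent_eqv by (meson equivclp_trans)
  also have "\<dots> \<longleftrightarrow> cancel comm a (r1 @ ry) \<noteq> None"
    using descent_iff_cancel[of "r1 @ ry" a] red w(1) ryS a by simp
  finally show ?thesis unfolding ry_def y_def .
qed

definition A_term :: "('a list set \<Rightarrow> complex) \<Rightarrow> real \<Rightarrow> 'a A_triple \<Rightarrow> 'a list set \<Rightarrow> complex" where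
  "A_term \<xi> p b x = (case b of (w', C, w'') \<Rightarrow>
     complex_of_real (p ^ card C) *
     shift_op S comm w' (proj_op S comm (clique_prod S comm C) (shift_op S comm w'' \<xi>)) x)"

lemma A_term_eval:
  assumes "set r1 \<subseteq> S" "set r2 \<subseteq> S" "is_clique S comm (set cl)" "distinct cl" "set z \<subseteq> S"
  shows "A_term \<xi> p (W r1, set cl, W r2) (W z) =
     (if \<forall>t\<in>set cl. descent t (rev r1 @ z)
      then complex_of_real (p ^ card (set cl)) * \<xi> (W (rev r2 @ rev r1 @ z)) else 0)"
proof -
  have clS: "set cl \<subseteq> S" and clq: "\<forall>x\<in>set cl. \<forall>y\<in>set cl. x \<noteq> y \<longrightarrow> comm x y"
    using assms(3) unfolding is_clique_def by auto
  have "L cl = length cl" using len_reduced[OF clS distinct_reduced[OF assms(4)]] .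
  moreover have "int (L (rev cl @ rev r1 @ z)) = int (L (rev r1 @ z)) - int (length cl)
      \<longleftrightarrow> (\<forall>t\<in>set cl. descent t (rev r1 @ z))"
    using len_clique_prefix_iff[OF assms(4) clS clq] assms(1,5) by simp
  moreover have "clique_prod S comm (set cl) = W cl" using clique_prod_eq[OF assms(3,4) refl] .
  ultimately show ?thesis by (simp add: A_term_def shift_op_def proj_op_def winv_W wmul_W)
qed

end

section \<open>Lifting the index set along a reduced word\<close>

locale reduced_Cons = racg comm S for comm :: "'a \<Rightarrow> 'a \<Rightarrow> bool" and S +
  fixes s :: 'a and r0 :: "'a list"
  assumes s_gen: "s \<in> S" and r0_gens: "set r0 \<subseteq> S" and s_r0_reduced: "reduced comm (s # r0)"
begin

abbreviation A0 where "A0 \<equiv> A_set S comm (W r0)"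
abbreviation A1 where "A1 \<equiv> A_set S comm (W (s # r0))"
abbreviation smul :: "'a list set \<Rightarrow> 'a list set" where "smul u \<equiv> wmul S comm (W [s]) u"

definition lift_left :: "'a A_triple \<Rightarrow> 'a A_triple" where
  "lift_left t = (case t of (a, C, b) \<Rightarrow> (smul a, C, b))"

definition lift_right :: "'a A_triple \<Rightarrow> 'a A_triple" where
  "lift_right t = (case t of (a, C, b) \<Rightarrow> (a, C, smul b))"

definition lift_clique :: "'a A_triple \<Rightarrow> 'a A_triple" where
  "lift_clique t = (case t of (a, C, b) \<Rightarrow> (a, insert s C, b))"

definition commutes_left :: "'a A_triple \<Rightarrow> bool" where
  "commutes_left t = (case t of (a, C, b) \<Rightarrow>
     (\<forall>u\<in>C. s = u \<or> comm s u) \<and> smul a = wmul S comm a (W [s]))"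

definition lifts :: "'a A_triple \<Rightarrow> 'a A_triple set" where
  "lifts t = (if commutes_left t then {lift_right t, lift_clique t} else {lift_left t})"

lemma r0_reduced: "reduced comm r0" and s_ascent: "cancel comm s r0 = None"
  using s_r0_reduced by auto

lemma s_cancel_None: "E r0 y \<Longrightarrow> reduced comm y \<Longrightarrow> set y \<subseteq> S \<Longrightarrow> cancel comm s y = None"
proof -
  assume a: "E r0 y" "reduced comm y" "set y \<subseteq> S"
  have "L (s # r0) = Suc (L r0)" using ascent_reduced_iff[OF s_gen r0_gens r0_reduced] s_ascent by simp
  moreover have "L (s # r0) = L (s # y)" using len_eqv eqv_context[OF a(1), of "[s]" "[]"] by simp
  moreover have "L r0 = L y" using len_eqv[OF a(1)] .
  ultimately show ?thesis using ascent_reduced_iff[OF s_gen a(3) a(2)] by simp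
qed

lemma A0E:
  assumes "t \<in> A0"
  obtains r1 cl r2 where "t = (W r1, set cl, W r2)" "A_words r0 r1 cl r2"
    "cancel comm s (r1 @ cl @ r2) = None"
proof -
  obtain r1 cl r2 where t: "t = (W r1, set cl, W r2)" and A: "A_words r0 r1 cl r2"
    using assms r0_gens by (rule A_setE)
  have "cancel comm s (r1 @ cl @ r2) = None"
    using s_cancel_None A A_wordsD[OF A] by (simp add: A_words_def)
  then show ?thesis using that t A by blast
qed

lemma commutes_left_iff:
  assumes "set r1 \<subseteq> S" "reduced comm r1" "cancel comm s r1 = None"
  shows "commutes_left (W r1, C, b) \<longleftrightarrow> (\<forall>u\<in>C. s = u \<or> comm s u) \<and> (\<forall>x\<in>set r1. x \<noteq> s \<and> comm x s)"
proof -
  have "W (s # r1) = W (r1 @ [s]) \<longleftrightarrow> (\<forall>x\<in>set r1. x \<noteq> s \<and> comm x s)"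
    using commuting_of_eq_Cons_snoc[OF s_gen assms] W_move_commuting[OF s_gen assms(1), of "[]"] by auto
  then show ?thesis unfolding commutes_left_def by (simp add: wmul_W)
qed

lemma commutes_left_facts:
  assumes A: "A_words r0 r1 cl r2" and s_asc: "cancel comm s (r1 @ cl @ r2) = None"
    and "commutes_left (W r1, set cl, W r2)"
  shows "\<forall>x\<in>set r1. x \<noteq> s \<and> comm x s" "\<forall>u\<in>set cl. u \<noteq> s \<and> comm u s" "cancel comm s r2 = None"
proof -
  note w = A_wordsD[OF A]
  have ci: "\<forall>u\<in>set cl. s = u \<or> comm s u" "\<forall>x\<in>set r1. x \<noteq> s \<and> comm x s"
    using assms(3) commutes_left_iff[OF w(1,4) cancel_append_None[OF s_asc]] by auto
  then show "\<forall>x\<in>set r1. x \<noteq> s \<and> comm x s" by simp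
  have cn: "cancel comm s (cl @ r2) = None"
    using cancel_commuting_prefix_None_iff[of r1 s comm "cl @ r2", OF ci(2)] s_asc by simp
  have "s \<notin> set cl"
  proof
    assume "s \<in> set cl"
    then obtain pre post where cl: "cl = pre @ s # post" by (meson split_list)
    have "\<forall>x\<in>set pre. x \<noteq> s \<and> comm x s"
    proof
      fix x assume x: "x \<in> set pre"
      then have "x \<noteq> s" using A unfolding cl by (auto simp: A_words_def)
      moreover have "comm s x" using ci(1) x calculation unfolding cl by auto
      ultimately show "x \<noteq> s \<and> comm x s" using comm_sym by blast
    qed
    then show False using cn cancel_commuting_prefix[of pre s comm "post @ r2"] unfolding cl by simp
  qed
  then show cl_comm: "\<forall>u\<in>set cl. u \<noteq> s \<and> comm u s" using ci(1) comm_sym by metis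
  show "cancel comm s r2 = None" using cancel_commuting_prefix_None_iff[of cl s comm r2, OF cl_comm] cn by simp
qed

lemma lift_left_mem:
  assumes "t \<in> A0" "\<not> commutes_left t"
  shows "lift_left t \<in> A1"
proof -
  obtain r1 cl r2 where t: "t = (W r1, set cl, W r2)" and A: "A_words r0 r1 cl r2"
    and s_asc: "cancel comm s (r1 @ cl @ r2) = None"
    using assms(1) by (rule A0E)
  note w = A_wordsD[OF A]
  have not_comm: "\<not> ((\<forall>u\<in>set cl. s = u \<or> comm s u) \<and> (\<forall>x\<in>set r1. x \<noteq> s \<and> comm x s))"
    using assms(2) commutes_left_iff[OF w(1,4) cancel_append_None[OF s_asc]] t by simp
  have asc: "cancel comm a (rev (s # r1)) = None"
    if "a \<in> S" "\<forall>u\<in>set cl. a = u \<or> comm a u" for a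
  proof (rule ccontr)
    have "cancel comm a (rev r1) = None" using A that by (simp add: A_words_def)
    moreover assume "cancel comm a (rev (s # r1)) \<noteq> None"
    ultimately have "a = s" "\<forall>x\<in>set r1. x \<noteq> s \<and> comm x s"
      using cancel_snoc_NoneD[of comm a "rev r1" s] by auto
    then show False using not_comm that(2) by blast
  qed
  have "A_words (s # r0) (s # r1) cl r2"
    using A asc s_gen s_asc eqv_context[of r0 "r1 @ cl @ r2" "[s]" "[]"] by (simp add: A_words_def)
  then show ?thesis using A_setI t by (fastforce simp: lift_left_def wmul_W)
qed

lemma lift_right_mem:
  assumes "t \<in> A0" "commutes_left t"
  shows "lift_right t \<in> A1"
proof -
  obtain r1 cl r2 where t: "t = (W r1, set cl, W r2)" and A: "A_words r0 r1 cl r2"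
    and s_asc: "cancel comm s (r1 @ cl @ r2) = None"
    using assms(1) by (rule A0E)
  note w = A_wordsD[OF A] and f = commutes_left_facts[OF A s_asc assms(2)[unfolded t]]
  have red: "reduced comm (s # r1 @ cl @ r2)" using A s_asc by (simp add: A_words_def)
  have e: "E (s # r0) (s # r1 @ cl @ r2)"
    using A eqv_context[of r0 _ "[s]" "[]"] by (simp add: A_words_def)
  have mv: "E (s # r1 @ cl @ r2) (r1 @ cl @ s # r2)"
    using eqv_move_commuting[of s "r1 @ cl" r2] s_gen w(1,2) f(1,2) by auto
  have "reduced comm (r1 @ cl @ s # r2)"
    using reduced_eqv[OF red mv] s_gen w(1-3) by simp
  then have "A_words (s # r0) r1 cl (s # r2)"
    using A s_gen equivclp_trans[OF e mv] by (simp add: A_words_def)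
  then show ?thesis using A_setI t by (fastforce simp: lift_right_def wmul_W)
qed

lemma lift_clique_mem:
  assumes "t \<in> A0" "commutes_left t"
  shows "lift_clique t \<in> A1"
proof -
  obtain r1 cl r2 where t: "t = (W r1, set cl, W r2)" and A: "A_words r0 r1 cl r2"
    and s_asc: "cancel comm s (r1 @ cl @ r2) = None"
    using assms(1) by (rule A0E)
  note w = A_wordsD[OF A] and f = commutes_left_facts[OF A s_asc assms(2)[unfolded t]]
  have red: "reduced comm (s # r1 @ cl @ r2)" using A s_asc by (simp add: A_words_def)
  have e: "E (s # r0) (s # r1 @ cl @ r2)"
    using A eqv_context[of r0 _ "[s]" "[]"] by (simp add: A_words_def)
  have mv: "E (s # r1 @ cl @ r2) (r1 @ (s # cl) @ r2)"
    using eqv_move_commuting[OF s_gen w(1) f(1)] by simp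
  have "reduced comm (r1 @ (s # cl) @ r2)"
    using reduced_eqv[OF red mv] s_gen w(1-3) by simp
  moreover have "is_clique S comm (set (s # cl))"
    using A f(2) s_gen comm_sym by (auto simp: A_words_def is_clique_def)
  ultimately have "A_words (s # r0) r1 (s # cl) r2"
    using A f(2) equivclp_trans[OF e mv] by (auto simp: A_words_def)
  then show ?thesis using A_setI t by (fastforce simp: lift_clique_def)
qed

lemma A0_facts:
  assumes "(w', C, w'') \<in> A0"
  shows "w' \<in> G" "w'' \<in> G" "wlen (smul w') = Suc (wlen w')"
    "commutes_left (w', C, w'') \<Longrightarrow> s \<notin> C"
proof -
  show "w' \<in> G" "w'' \<in> G" using assms unfolding A_set_def by auto
  obtain r1 cl r2 where t: "(w', C, w'') = (W r1, set cl, W r2)" and A: "A_words r0 r1 cl r2"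
    and s_asc: "cancel comm s (r1 @ cl @ r2) = None"
    using assms by (rule A0E)
  then have w': "w' = W r1" and C: "C = set cl" and w'': "w'' = W r2" by simp_all
  note w = A_wordsD[OF A]
  show "wlen (smul w') = Suc (wlen w')"
    using ascent_reduced_iff[OF s_gen w(1,4)] cancel_append_None[OF s_asc] unfolding w' by (simp add: wmul_W)
  show "s \<notin> C" if "commutes_left (w', C, w'')"
    using commutes_left_facts(2)[OF A s_asc] that unfolding w' C w'' by blast
qed

lemma smul_smul: "u \<in> G \<Longrightarrow> smul (smul u) = u"
proof -
  assume "u \<in> G"
  then obtain xs where xs: "set xs \<subseteq> S" "u = W xs" using cox_group_iff by blast
  have "W (s # s # xs) = W xs" using eqv_double[OF s_gen] W_eq by blast
  then show ?thesis using xs by (simp add: wmul_W)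
qed

lemma eqv_r0_cancel:
  assumes "cancel comm s y = Some y'" "E (s # r0) y" "set y \<subseteq> S"
  shows "E r0 y'"
proof -
  have e1: "E (s # y) y'" using eqv_cancel[OF assms(1) s_gen assms(3)] .
  have e2: "E (s # s # r0) (s # y)" using eqv_context[OF assms(2), of "[s]" "[]"] by simp
  have e3: "E r0 (s # s # r0)" using equivclp_sym[OF eqv_double[OF s_gen]] .
  show ?thesis using equivclp_trans[OF equivclp_trans[OF e3 e2] e1] .
qed

lemma W_Cons_cancel: "cancel comm s y = Some y' \<Longrightarrow> set y \<subseteq> S \<Longrightarrow> W (s # y') = W y"
proof -
  assume a: "cancel comm s y = Some y'" "set y \<subseteq> S"
  have "E (s # y) y'" using eqv_cancel[OF a(1) s_gen a(2)] .
  then have "E (s # s # y) (s # y')" using eqv_context[of _ _ "[s]" "[]"] by simp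
  then have "E y (s # y')" using equivclp_trans[OF equivclp_sym[OF eqv_double[OF s_gen, of y]]] by blast
  then show ?thesis using W_eq equivclp_sym by metis
qed

lemma A_words_cancel:
  assumes "A_words (s # r0) r1 cl r2" "cancel comm s (r1 @ cl @ r2) = Some (r1' @ cl' @ r2')"
  shows "reduced comm (r1' @ cl' @ r2')" "E r0 (r1' @ cl' @ r2')"
proof -
  have "reduced comm (r1 @ cl @ r2)" "E (s # r0) (r1 @ cl @ r2)"
    using assms(1) by (simp_all add: A_words_def)
  moreover have "set (r1 @ cl @ r2) \<subseteq> S" using A_wordsD(1-3)[OF assms(1)] by simp
  ultimately show "reduced comm (r1' @ cl' @ r2')" "E r0 (r1' @ cl' @ r2')"
    using reduced_cancel[OF assms(2)] eqv_r0_cancel[OF assms(2)] by blast+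
qed

lemma lifts_cover_left:
  assumes A: "A_words (s # r0) r1 cl r2" and r1': "cancel comm s r1 = Some r1'"
  shows "\<exists>t\<in>A0. (W r1, set cl, W r2) \<in> lifts t"
proof -
  note w = A_wordsD[OF A]
  have r1'S: "set r1' \<subseteq> S" using set_cancel[OF r1'] w(1) by auto
  have r1'_red: "reduced comm r1'" "cancel comm s r1' = None" using reduced_cancel[OF r1' w(4)] by auto
  have W_r1: "W (s # r1') = W r1" using W_Cons_cancel[OF r1' w(1)] .
  have L_r1: "L r1 = Suc (L r1')"
    using len_reduced[OF w(1,4)] len_reduced[OF r1'S r1'_red(1)] length_cancel[OF r1'] by simp
  have "A_words r0 r1' cl r2"
    unfolding A_words_def
  proof (intro conjI ballI impI)
    fix a assume a: "a \<in> S" "\<forall>u\<in>set cl. a = u \<or> comm a u"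
    have "W (r1 @ [a]) = W (s # r1' @ [a])" using W_r1 by (metis append_Cons wmul_W)
    then have "L (r1 @ [a]) \<le> Suc (L (r1' @ [a]))" using len_Cons_cases[of "r1' @ [a]" s] r1'S a s_gen by auto
    then have "L r1' < L (r1' @ [a])" using A_words_right_ascent[OF A a] L_r1 by simp
    then show "cancel comm a (rev r1') = None" using right_ascent_iff[OF r1'S a(1) r1'_red(1)] by simp
  qed (use A A_words_cancel[OF A cancel_append_Some[OF r1']] r1'S in \<open>auto simp: A_words_def\<close>)
  moreover have "\<not> commutes_left (W r1', set cl, W r2)"
  proof
    assume "commutes_left (W r1', set cl, W r2)"
    then have ci: "\<forall>u\<in>set cl. s = u \<or> comm s u" "\<forall>x\<in>set r1'. x \<noteq> s \<and> comm x s"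
      using commutes_left_iff[OF r1'S r1'_red] by auto
    have "W r1 = W (r1' @ [s])" using W_r1 W_move_commuting[OF s_gen r1'S ci(2), of "[]"] by simp
    then have "E r1 (r1' @ [s])" using W_eq by blast
    then have "E (r1 @ [s]) (r1' @ [s, s])" using eqv_context[of r1 "r1' @ [s]" "[]" "[s]"] by simp
    moreover have "E (r1' @ [s, s]) r1'" using cstep.del[OF s_gen, of comm r1' "[]"] by auto
    ultimately have "L (r1 @ [s]) = L r1'" using len_eqv equivclp_trans by metis
    then show False using A_words_right_ascent[OF A s_gen ci(1)] L_r1 by simp
  qed
  moreover have "lift_left (W r1', set cl, W r2) = (W r1, set cl, W r2)"
    using W_r1 by (simp add: lift_left_def wmul_W)
  ultimately show ?thesis unfolding lifts_def by (metis A_setI singletonI)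
qed

lemma lifts_cover_clique:
  assumes A: "A_words (s # r0) r1 cl r2" and r1_comm: "\<forall>x\<in>set r1. x \<noteq> s \<and> comm x s"
    and cl': "cancel comm s cl = Some cl'"
  shows "\<exists>t\<in>A0. (W r1, set cl, W r2) \<in> lifts t"
proof -
  note w = A_wordsD[OF A]
  obtain pre post where cl: "cl = pre @ s # post" "cl' = pre @ post" using cancel_SomeD[OF cl'] by blast
  have set_cl: "set cl = insert s (set cl')" "s \<notin> set cl'" using A cl by (auto simp: A_words_def)
  have c: "cancel comm s (r1 @ cl @ r2) = Some (r1 @ cl' @ r2)"
    using cancel_commuting_prefix_Some[OF r1_comm cancel_append_Some[OF cl', of r2]] by simp
  have "A_words r0 r1 cl' r2"
    unfolding A_words_def
  proof (intro conjI ballI impI)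
    fix a assume a: "a \<in> S" "\<forall>u\<in>set cl'. a = u \<or> comm a u"
    show "cancel comm a (rev r1) = None"
    proof (cases "a = s \<or> comm a s")
      case True
      then show ?thesis using A a set_cl(1) by (auto simp: A_words_def)
    next
      case False
      then have "a \<notin> set r1" using r1_comm by blast
      then show ?thesis using cancel_mem[of comm a "rev r1"] by (metis set_rev)
    qed
  qed (use A A_words_cancel[OF A c] cl in \<open>auto simp: A_words_def is_clique_def\<close>)
  moreover have "commutes_left (W r1, set cl', W r2)"
    using commutes_left_iff[OF w(1,4)] cancel_commuting_prefix_None_iff[of r1 s comm "[]", OF r1_comm] A r1_comm set_cl
    by (auto simp: A_words_def is_clique_def)
  moreover have "lift_clique (W r1, set cl', W r2) = (W r1, set cl, W r2)"
    using set_cl by (simp add: lift_clique_def)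
  ultimately show ?thesis unfolding lifts_def by (metis A_setI insertI2 singletonI)
qed

lemma lifts_cover_right:
  assumes A: "A_words (s # r0) r1 cl r2" and pre_comm: "\<forall>x\<in>set (r1 @ cl). x \<noteq> s \<and> comm x s"
    and r2': "cancel comm s r2 = Some r2'"
  shows "\<exists>t\<in>A0. (W r1, set cl, W r2) \<in> lifts t"
proof -
  note w = A_wordsD[OF A]
  have c: "cancel comm s (r1 @ cl @ r2) = Some (r1 @ cl @ r2')"
    using cancel_commuting_prefix_Some[OF pre_comm r2'] by simp
  have "A_words r0 r1 cl r2'"
    using A A_words_cancel[OF A c] set_cancel[OF r2'] w(3) by (auto simp: A_words_def)
  moreover have "commutes_left (W r1, set cl, W r2')"
    using commutes_left_iff[OF w(1,4)] cancel_commuting_prefix_None_iff[of r1 s comm "[]"] pre_comm comm_sym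
    by auto
  moreover have "lift_right (W r1, set cl, W r2') = (W r1, set cl, W r2)"
    using W_Cons_cancel[OF r2' w(3)] by (simp add: lift_right_def wmul_W)
  ultimately show ?thesis unfolding lifts_def by (metis A_setI insertI1)
qed

lemma lifts_cover:
  assumes "b \<in> A1"
  shows "\<exists>t\<in>A0. b \<in> lifts t"
proof -
  have "set (s # r0) \<subseteq> S" using s_gen r0_gens by simp
  with assms obtain r1 cl r2 where b: "b = (W r1, set cl, W r2)" and A: "A_words (s # r0) r1 cl r2"
    by (rule A_setE)
  note w = A_wordsD[OF A]
  have y: "E (s # r0) (r1 @ cl @ r2)" "reduced comm (r1 @ cl @ r2)"
    using A by (simp_all add: A_words_def)
  have yS: "set (r1 @ cl @ r2) \<subseteq> S" using w(1-3) by simp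
  have "L (s # r1 @ cl @ r2) = L r0"
    using len_eqv[OF eqv_context[OF y(1), of "[s]" "[]"]] len_eqv[OF eqv_double[OF s_gen]] by simp
  also have "\<dots> < L (r1 @ cl @ r2)"
    using ascent_reduced_iff[OF s_gen r0_gens r0_reduced] s_ascent len_eqv[OF y(1)] by simp
  finally have dsc: "cancel comm s (r1 @ cl @ r2) \<noteq> None"
    using descent_iff_cancel[OF yS s_gen y(2)] by simp
  show ?thesis
  proof (cases "cancel comm s r1")
    case (Some r1')
    then show ?thesis using lifts_cover_left[OF A] unfolding b by blast
  next
    case None
    from cancel_append_NoneD[OF None dsc]
    have r1_comm: "\<forall>x\<in>set r1. x \<noteq> s \<and> comm x s" and dsc': "cancel comm s (cl @ r2) \<noteq> None"
      by blast+
    show ?thesis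
    proof (cases "cancel comm s cl")
      case (Some cl')
      then show ?thesis using lifts_cover_clique[OF A r1_comm] unfolding b by blast
    next
      case None
      from cancel_append_NoneD[OF None dsc']
      have "\<forall>x\<in>set (r1 @ cl). x \<noteq> s \<and> comm x s" and "cancel comm s r2 \<noteq> None"
        using r1_comm by auto
      then show ?thesis using lifts_cover_right[OF A] unfolding b by blast
    qed
  qed
qed

lemma lifts_subset_A1: "t \<in> A0 \<Longrightarrow> lifts t \<subseteq> A1"
  using lift_left_mem lift_right_mem lift_clique_mem by (simp add: lifts_def)

lemma A1_eq_UN_lifts: "A1 = (\<Union>t\<in>A0. lifts t)"
  using lifts_cover lifts_subset_A1 by blast

definition lower :: "'a A_triple \<Rightarrow> 'a A_triple" where
  "lower b = (case b of (u', D, u'') \<Rightarrow>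
     if wlen (smul u') < wlen u' then (smul u', D, u'')
     else if s \<in> D then (u', D - {s}, u'')
     else (u', D, smul u''))"

lemma lower_lifts:
  assumes "t \<in> A0" "b \<in> lifts t"
  shows "lower b = t"
proof -
  obtain w' C w'' where t: "t = (w', C, w'')" by (cases t)
  note facts = A0_facts[OF assms(1)[unfolded t]]
  show ?thesis
  proof (cases "commutes_left t")
    case False
    then have "b = (smul w', C, w'')" using assms(2) t by (simp add: lifts_def lift_left_def)
    then show ?thesis using facts(3) smul_smul[OF facts(1)] t by (simp add: lower_def)
  next
    case True
    then have "b = (w', C, smul w'') \<or> b = (w', insert s C, w'')"
      using assms(2) t by (simp add: lifts_def lift_right_def lift_clique_def)
    then show ?thesis using facts(3,4) True smul_smul[OF facts(2)] t by (auto simp: lower_def)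
  qed
qed

lemma lifts_disjoint: "t \<in> A0 \<Longrightarrow> t' \<in> A0 \<Longrightarrow> t \<noteq> t' \<Longrightarrow> lifts t \<inter> lifts t' = {}"
  using lower_lifts by blast

lemma A_term_lift_left:
  assumes "t \<in> A0" "set z \<subseteq> S"
  shows "A_term \<xi> p (lift_left t) (W z) = A_term \<xi> p t (W (s # z))"
proof -
  obtain r1 cl r2 where t: "t = (W r1, set cl, W r2)" and A: "A_words r0 r1 cl r2"
    using assms(1) by (rule A0E)
  note w = A_wordsD[OF A]
  have "is_clique S comm (set cl)" "distinct cl" using A by (auto simp: A_words_def)
  then show ?thesis
    using A_term_eval[of "s # r1" r2 cl z] A_term_eval[of r1 r2 cl "s # z"] w s_gen assms(2) t
    by (simp add: lift_left_def wmul_W)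
qed

lemma A_term_vanishes_at_descent:
  assumes "t \<in> A0" "\<not> commutes_left t" "set z \<subseteq> S" "descent s z"
  shows "A_term \<xi> p t (W z) = 0"
proof -
  obtain r1 cl r2 where t: "t = (W r1, set cl, W r2)" and A: "A_words r0 r1 cl r2"
    and s_asc: "cancel comm s (r1 @ cl @ r2) = None"
    using assms(1) by (rule A0E)
  note w = A_wordsD[OF A]
  have cq: "is_clique S comm (set cl)" "distinct cl" using A by (auto simp: A_words_def)
  have "\<not> (\<forall>u\<in>set cl. descent u (rev r1 @ z))"
  proof
    assume cl_desc: "\<forall>u\<in>set cl. descent u (rev r1 @ z)"
    have yS: "set (rev r1 @ z) \<subseteq> S" using w(1) assms(3) by auto
    have "cancel comm s (r1 @ reduce comm (rev r1 @ z)) \<noteq> None"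
      using descent_via_clique_descents[OF A assms(3) s_gen cl_desc] assms(4) by simp
    then have r1_comm: "\<forall>x\<in>set r1. x \<noteq> s \<and> comm x s"
      and "cancel comm s (reduce comm (rev r1 @ z)) \<noteq> None"
      using cancel_append_NoneD[OF cancel_append_None[OF s_asc]] by blast+
    then have "descent s (rev r1 @ z)" using descent_iff_cancel_reduce[OF yS s_gen] by simp
    then have "\<forall>u\<in>set cl. s = u \<or> comm s u"
      using descents_commute[OF yS s_gen] cl_desc w(2) by blast
    then show False
      using assms(2) r1_comm commutes_left_iff[OF w(1,4) cancel_append_None[OF s_asc]] t by simp
  qed
  then show ?thesis using A_term_eval[OF w(1,3) cq assms(3)] t by auto
qed

lemma clique_descents_move_s:
  assumes A: "A_words r0 r1 cl r2" and s_asc: "cancel comm s (r1 @ cl @ r2) = None"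
    and "commutes_left (W r1, set cl, W r2)" and zS: "set z \<subseteq> S"
  shows "E (rev r1 @ s # z) (s # rev r1 @ z)"
    "\<forall>u\<in>set cl. descent u (rev r1 @ s # z) \<longleftrightarrow> descent u (rev r1 @ z)"
proof -
  note w = A_wordsD[OF A] and f = commutes_left_facts[OF A s_asc assms(3)]
  show mv: "E (rev r1 @ s # z) (s # rev r1 @ z)"
    using equivclp_sym[OF eqv_move_commuting[of s "rev r1" z]] s_gen w(1) f(1) by auto
  show "\<forall>u\<in>set cl. descent u (rev r1 @ s # z) \<longleftrightarrow> descent u (rev r1 @ z)"
  proof
    fix u assume "u \<in> set cl"
    then have "u \<in> S" "u \<noteq> s" "comm u s" using w(2) f(2) by auto
    then have "descent u (s # rev r1 @ z) \<longleftrightarrow> descent u (rev r1 @ z)"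
      using descent_Cons_commuting[of u s "rev r1 @ z"] s_gen w(1) zS by auto
    then show "descent u (rev r1 @ s # z) \<longleftrightarrow> descent u (rev r1 @ z)"
      using descent_eqv[OF mv] by simp
  qed
qed

lemma A_term_lift_right:
  assumes "t \<in> A0" "commutes_left t" "set z \<subseteq> S"
  shows "A_term \<xi> p (lift_right t) (W z) = A_term \<xi> p t (W (s # z))"
proof -
  obtain r1 cl r2 where t: "t = (W r1, set cl, W r2)" and A: "A_words r0 r1 cl r2"
    and s_asc: "cancel comm s (r1 @ cl @ r2) = None"
    using assms(1) by (rule A0E)
  note w = A_wordsD[OF A] and mv = clique_descents_move_s[OF A s_asc assms(2)[unfolded t] assms(3)]
  have cq: "is_clique S comm (set cl)" "distinct cl" using A by (auto simp: A_words_def)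
  have "W (rev r2 @ rev r1 @ s # z) = W (rev r2 @ s # rev r1 @ z)"
    using eqv_context[OF mv(1), of "rev r2" "[]"] W_eq by simp
  then show ?thesis
    using A_term_eval[of r1 "s # r2" cl z] A_term_eval[of r1 r2 cl "s # z"] mv(2) w s_gen cq assms(3) t
    by (simp add: lift_right_def wmul_W)
qed

lemma A_term_lift_clique:
  assumes "t \<in> A0" "commutes_left t" "set z \<subseteq> S"
  shows "A_term \<xi> p (lift_clique t) (W z) =
    (if descent s z then complex_of_real p * A_term \<xi> p t (W z) else 0)"
proof -
  obtain r1 cl r2 where t: "t = (W r1, set cl, W r2)" and A: "A_words r0 r1 cl r2"
    and s_asc: "cancel comm s (r1 @ cl @ r2) = None"
    using assms(1) by (rule A0E)
  note w = A_wordsD[OF A] and f = commutes_left_facts[OF A s_asc assms(2)[unfolded t]]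
  have cq: "is_clique S comm (set cl)" "distinct cl" using A by (auto simp: A_words_def)
  have cq': "is_clique S comm (set (s # cl))" "distinct (s # cl)"
    using cq f(2) s_gen comm_sym by (auto simp: is_clique_def)
  have yS: "set (rev r1 @ z) \<subseteq> S" using w(1) assms(3) by auto
  have "descent s z \<longleftrightarrow> descent s (rev r1 @ z)" if "\<forall>u\<in>set cl. descent u (rev r1 @ z)"
    using descent_via_clique_descents[OF A assms(3) s_gen that] f(1)
      cancel_commuting_prefix_None_iff[of r1 s comm] descent_iff_cancel_reduce[OF yS s_gen] by simp
  moreover have "card (set (s # cl)) = Suc (card (set cl))" using cq'(2) by (simp add: distinct_card)
  ultimately show ?thesis
    using A_term_eval[OF w(1,3) cq' assms(3)] A_term_eval[OF w(1,3) cq assms(3)] t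
    by (auto simp: lift_clique_def)
qed

lemma sum_lifts:
  assumes "t \<in> A0" "set z \<subseteq> S"
  shows "(\<Sum>b\<in>lifts t. A_term \<xi> p b (W z)) =
    A_term \<xi> p t (W (s # z)) + (if descent s z then complex_of_real p * A_term \<xi> p t (W z) else 0)"
proof (cases "commutes_left t")
  case True
  obtain w' C w'' where t: "t = (w', C, w'')" by (cases t)
  have "lift_right t \<noteq> lift_clique t"
    using A0_facts(4)[OF assms(1)[unfolded t]] True t by (auto simp: lift_right_def lift_clique_def)
  then show ?thesis
    using A_term_lift_right[OF assms(1) True assms(2)] A_term_lift_clique[OF assms(1) True assms(2)] True
    by (simp add: lifts_def)
next
  case False
  then show ?thesis
    using A_term_lift_left[OF assms] A_term_vanishes_at_descent[OF assms(1) False assms(2)]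
    by (simp add: lifts_def)
qed

lemma sum_A1:
  assumes "set z \<subseteq> S"
  shows "(\<Sum>b\<in>A1. A_term \<xi> p b (W z)) = (\<Sum>b\<in>A0. A_term \<xi> p b (W (s # z))) +
          (if descent s z then complex_of_real p * (\<Sum>b\<in>A0. A_term \<xi> p b (W z)) else 0)"
proof -
  have "(\<Sum>b\<in>A1. A_term \<xi> p b (W z)) = (\<Sum>t\<in>A0. \<Sum>b\<in>lifts t. A_term \<xi> p b (W z))"
    unfolding A1_eq_UN_lifts
    by (rule sum.UNION_disjoint) (auto simp: finite_A_set[OF r0_gens] lifts_def dest: lifts_disjoint)
  also have "\<dots> = (\<Sum>t\<in>A0. A_term \<xi> p t (W (s # z)) +
      (if descent s z then complex_of_real p * A_term \<xi> p t (W z) else 0))"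
    using sum_lifts[OF _ assms] by (rule sum.cong[OF refl])
  finally show ?thesis by (simp add: sum.distrib sum_distrib_left)
qed

end

section \<open>Expansion of the Hecke operators\<close>

context racg
begin

lemma A_set_unit: "A_set S comm (W []) = {(W [], {}, W [])}"
proof
  show "A_set S comm (W []) \<subseteq> {(W [], {}, W [])}"
  proof
    fix b assume "b \<in> A_set S comm (W [])"
    then obtain r1 cl r2 where b: "b = (W r1, set cl, W r2)" and A: "A_words [] r1 cl r2"
      by (rule A_setE) simp
    have "length r1 + length cl + length r2 = 0" using A_words_length[OF A] len_le_length[of "[]"] by simp
    then show "b \<in> {(W [], {}, W [])}" using b by simp
  qed
next
  have "A_words [] [] [] []" by (simp add: A_words_def is_clique_def)
  then show "{(W [], {}, W [])} \<subseteq> A_set S comm (W [])" using A_setI by fastforce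
qed

lemma hecke_reduced_word:
  assumes "set xs \<subseteq> S" "reduced comm xs" "set z \<subseteq> S"
  shows "foldr (\<lambda>s f. hecke_gen S comm p s \<circ> f) xs id \<xi> (W z) =
    (\<Sum>b\<in>A_set S comm (W xs). A_term \<xi> p b (W z))"
  using assms
proof (induction xs arbitrary: z)
  case Nil
  have "A_term \<xi> p (W [], {}, W []) (W z) = \<xi> (W z)"
    using A_term_eval[of "[]" "[]" "[]" z \<xi> p] Nil.prems by (simp add: is_clique_def)
  then show ?case using A_set_unit by simp
next
  case (Cons s xs)
  interpret reduced_Cons comm S s xs
    using Cons.prems by unfold_locales auto
  let ?T = "foldr (\<lambda>s f. hecke_gen S comm p s \<circ> f) xs id \<xi>"
  have "foldr (\<lambda>s f. hecke_gen S comm p s \<circ> f) (s # xs) id \<xi> (W z) =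
      ?T (W (s # z)) + (if descent s z then complex_of_real p * ?T (W z) else 0)"
    unfolding hecke_gen_def by (simp add: wgen_W wmul_W)
  also have "\<dots> = (\<Sum>b\<in>A0. A_term \<xi> p b (W (s # z))) +
      (if descent s z then complex_of_real p * (\<Sum>b\<in>A0. A_term \<xi> p b (W z)) else 0)"
    using s_gen Cons.prems(3)
    by (simp only: Cons.IH[OF r0_gens r0_reduced] set_simps insert_subset simp_thms)
  also have "\<dots> = (\<Sum>b\<in>A1. A_term \<xi> p b (W z))"
    using sum_A1[OF Cons.prems(3)] by simp
  finally show ?case .
qed

lemma hecke_op_W:
  assumes "w \<in> G" "set z \<subseteq> S"
  shows "hecke_op S comm p w \<xi> (W z) = (\<Sum>b\<in>A_set S comm w. A_term \<xi> p b (W z))"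
proof -
  define xs where "xs = (SOME xs. xs \<in> w \<and> length xs = wlen w)"
  obtain r where r: "set r \<subseteq> S" "reduced comm r" "w = W r"
    using cox_group_reduced_word[OF assms(1)] by blast
  have "r \<in> w \<and> length r = wlen w" using r mem_W len_reduced[OF r(1,2)] by simp
  then have xs: "xs \<in> w" "length xs = wlen w" unfolding xs_def by (metis (mono_tags, lifting) someI_ex)+
  have "E r xs" using xs(1) r(3) mem_W by simp
  then have xsS: "set xs \<subseteq> S" and W_xs: "W xs = w"
    using eqv_set_subset r W_eq by (auto simp: equivclp_sym)
  have "reduced comm xs" using reduced_if_len[OF xsS] xs(2) W_xs by simp
  then show ?thesis
    unfolding hecke_op_def xs_def[symmetric] using hecke_reduced_word[OF xsS _ assms(2)] W_xs by simp
qed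

end

text \<open>The expansion is an identity of finite sums holding for every \<open>p\<close> and \<open>\<xi>\<close>.\<close>

theorem lemma2p7:
  fixes S :: "'a set" and comm :: "'a \<Rightarrow> 'a \<Rightarrow> bool" and q p :: real
    and w :: "'a list set" and \<xi> :: "'a list set \<Rightarrow> complex"
  assumes "finite S"
    and "\<And>s t. comm s t \<Longrightarrow> comm t s"
    and "q > 0"
    and "p = (q - 1) / sqrt q"
    and "w \<in> cox_group S comm"
    and "(\<lambda>x. (cmod (\<xi> x))\<^sup>2) summable_on cox_group S comm"
    and "\<And>x. x \<notin> cox_group S comm \<Longrightarrow> \<xi> x = 0"
  shows "\<forall>x\<in>cox_group S comm.
     hecke_op S comm p w \<xi> x =
     (\<Sum>(w', C, w'')\<in>A_set S comm w.
        complex_of_real (p ^ card C) *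
        shift_op S comm w' (proj_op S comm (clique_prod S comm C) (shift_op S comm w'' \<xi>)) x)"
proof
  interpret racg comm S using assms(1,2) by unfold_locales auto
  fix x assume "x \<in> cox_group S comm"
  then obtain z where "set z \<subseteq> S" "x = W z" using cox_group_iff by blast
  then show "hecke_op S comm p w \<xi> x =
     (\<Sum>(w', C, w'')\<in>A_set S comm w.
        complex_of_real (p ^ card C) *
        shift_op S comm w' (proj_op S comm (clique_prod S comm C) (shift_op S comm w'' \<xi>)) x)"
    using hecke_op_W[OF assms(5)] by (simp add: A_term_def case_prod_beta')
qed

end
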